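(* Let $x:M^n\to\mathbb{R}^{n+1}$ be a locally strongly convex centroaffine hypersurface. Then $\|\hat\nabla K\|^2\ge\frac{3n^2}{n+2}\|\hat\nabla T\|^2$, where, with respect to any local $h$-orthonormal frame $\{e_i\}$, $\|\hat\nabla K\|^2=\sum_{i,j,k,l}(K^k_{ij,l})^2$ and $\|\hat\nabla T\|^2=\sum_{i,j}(T^j_{,i})^2$. Moreover, equality holds if and only if the traceless difference tensor $\tilde K$ is parallel, i.e. $\hat\nabla\tilde K=0$, or equivalently $$K^k_{ij,l}=\tfrac{n}{n+2}\big(T^k_{,l}\delta_{ij}+T^i_{,l}\delta_{jk}+T^j_{,l}\delta_{ik}\big),\quad 1\le i,j,k,l\le n.$$
   Context: A centroaffine hypersurface is an immersion $x:M^n\to\mathbb{R}^{n+1}$ whose position vector is everywhere transversal to the tangent space; with $D$ the flat connection of $\mathbb{R}^{n+1}$, $D_Xx_*(Y)=x_*(\nabla_XY)+h(X,Y)(-\varepsilon x)$, $\varepsilon=\pm1$, defines the induced connection $\nabla$ and centroaffine metric $h$. Locally strongly convex means $h$ definite, and $\varepsilon$ is chosen so that $h$ is positive definite. $\hat\nabla$ is the Levi-Civita connection of $h$, $K_XY=\nabla_XY-\hat\nabla_XY$ the difference tensor, $T$ the Tchebychev vector field defined by $h(T,X)=\frac1n\operatorname{trace}K_X$, and $\tilde K(X,Y)=K(X,Y)-\frac{n}{n+2}[h(X,Y)T+h(X,T)Y+h(Y,T)X]$. In an $h$-orthonormal frame $\{e_i\}$: $K^k_{ij}=h(K_{e_i}e_j,e_k)$,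 $T^i=h(T,e_i)$, $K^k_{ij,l}=h((\hat\nabla_{e_l}K)(e_i,e_j),e_k)$, $T^j_{,i}=h(\hat\nabla_{e_i}T,e_j)$. *)

theory Defs
  imports "HOL-Analysis.Analysis"
begin

(* Local coordinate model: the hypersurface is given by a local parametrization
   x : U \<subseteq> R^n \<rightarrow> R^(n+1) (coordinates u = (u_1..u_n), index type 'n).
   All geometric quantities are computed in the coordinate frame \<partial>_1..\<partial>_n. *)

definition pd :: "(real^'n \<Rightarrow> 'b::real_normed_vector) \<Rightarrow> 'n \<Rightarrow> real^'n \<Rightarrow> 'b" where
  "pd F i u = frechet_derivative F (at u) (axis i 1)"

fun pdl :: "(real^'n \<Rightarrow> 'b::real_normed_vector) \<Rightarrow> 'n list \<Rightarrow> real^'n \<Rightarrow> 'b" where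
  "pdl F [] = F"
| "pdl F (i # is) = pd (pdl F is) i"

definition smooth_on_open :: "(real^'n \<Rightarrow> 'b::real_normed_vector) \<Rightarrow> (real^'n) set \<Rightarrow> bool" where
  "smooth_on_open F U \<longleftrightarrow> open U \<and> (\<forall>is. pdl F is differentiable_on U)"

text \<open>Immersion with position vector transversal to the tangent space:
  x(u), x_1(u), ..., x_n(u) are linearly independent.\<close>
definition centroaffine_at :: "(real^'n \<Rightarrow> real^'m) \<Rightarrow> real^'n \<Rightarrow> bool" where
  "centroaffine_at x u \<longleftrightarrow>
     (\<forall>c a. c *\<^sub>R x u + (\<Sum>i\<in>UNIV. a i *\<^sub>R pd x i u) = 0 \<longrightarrow> c = 0 \<and> (\<forall>i. a i = 0))"

text \<open>Gauss formula D_{\<partial>i} x_*(\<partial>j) = x_*(\<nabla>_{\<partial>i}\<partial>j) + h(\<partial>i,\<partial>j)(-\<epsilon> x).\<close>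
definition gauss_coeffs :: "(real^'n \<Rightarrow> real^'m) \<Rightarrow> real \<Rightarrow> real^'n \<Rightarrow> 'n \<Rightarrow> 'n \<Rightarrow> ('n \<Rightarrow> real) \<times> real" where
  "gauss_coeffs x \<epsilon> u i j = (THE (g, c). pd (pd x j) i u =
        (\<Sum>k\<in>UNIV. g k *\<^sub>R pd x k u) + c *\<^sub>R (- \<epsilon> *\<^sub>R x u))"

text \<open>Induced connection \<nabla>_{\<partial>i}\<partial>j = \<Sum>k Gam k i j \<partial>k.\<close>
definition Gam :: "(real^'n \<Rightarrow> real^'m) \<Rightarrow> real \<Rightarrow> real^'n \<Rightarrow> 'n \<Rightarrow> 'n \<Rightarrow> 'n \<Rightarrow> real" where
  "Gam x \<epsilon> u k i j = fst (gauss_coeffs x \<epsilon> u i j) k"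

definition hmet :: "(real^'n \<Rightarrow> real^'m) \<Rightarrow> real \<Rightarrow> real^'n \<Rightarrow> 'n \<Rightarrow> 'n \<Rightarrow> real" where
  "hmet x \<epsilon> u i j = snd (gauss_coeffs x \<epsilon> u i j)"

definition hpos :: "(real^'n \<Rightarrow> real^'m) \<Rightarrow> real \<Rightarrow> real^'n \<Rightarrow> bool" where
  "hpos x \<epsilon> u \<longleftrightarrow> (\<forall>v::real^'n. v \<noteq> 0 \<longrightarrow> (\<Sum>i\<in>UNIV. \<Sum>j\<in>UNIV. hmet x \<epsilon> u i j * v$i * v$j) > 0)"

definition hinv :: "(real^'n \<Rightarrow> real^'m) \<Rightarrow> real \<Rightarrow> real^'n \<Rightarrow> 'n \<Rightarrow> 'n \<Rightarrow> real" where
  "hinv x \<epsilon> u i j = matrix_inv ((\<chi> a b. hmet x \<epsilon> u a b) :: real^'n^'n) $ i $ j"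

definition chr :: "(real^'n \<Rightarrow> real^'m) \<Rightarrow> real \<Rightarrow> real^'n \<Rightarrow> 'n \<Rightarrow> 'n \<Rightarrow> 'n \<Rightarrow> real" where
  "chr x \<epsilon> u k i j = (1/2) * (\<Sum>l\<in>UNIV. hinv x \<epsilon> u k l *
      (pd (\<lambda>v. hmet x \<epsilon> v j l) i u + pd (\<lambda>v. hmet x \<epsilon> v i l) j u - pd (\<lambda>v. hmet x \<epsilon> v i j) l u))"

text \<open>Difference tensor K(\<partial>i,\<partial>j) = \<Sum>k Kc k i j \<partial>k.\<close>
definition Kc :: "(real^'n \<Rightarrow> real^'m) \<Rightarrow> real \<Rightarrow> real^'n \<Rightarrow> 'n \<Rightarrow> 'n \<Rightarrow> 'n \<Rightarrow> real" where
  "Kc x \<epsilon> u k i j = Gam x \<epsilon> u k i j - chr x \<epsilon> u k i j"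

text \<open>Tchebychev vector field T = \<Sum>j Tc j \<partial>j, h(T,X) = (1/n) trace K_X.\<close>
definition Tc :: "(real^'n \<Rightarrow> real^'m) \<Rightarrow> real \<Rightarrow> real^'n \<Rightarrow> 'n \<Rightarrow> real" where
  "Tc x \<epsilon> u j = (1 / real CARD('n)) *
      (\<Sum>i\<in>UNIV. hinv x \<epsilon> u j i * (\<Sum>k\<in>UNIV. Kc x \<epsilon> u k i k))"

definition Tlow :: "(real^'n \<Rightarrow> real^'m) \<Rightarrow> real \<Rightarrow> real^'n \<Rightarrow> 'n \<Rightarrow> real" where
  "Tlow x \<epsilon> u i = (\<Sum>m\<in>UNIV. hmet x \<epsilon> u i m * Tc x \<epsilon> u m)"

definition kdelta :: "'a \<Rightarrow> 'a \<Rightarrow> real" where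
  "kdelta a b = (if a = b then 1 else 0)"

definition Ktil :: "(real^'n \<Rightarrow> real^'m) \<Rightarrow> real \<Rightarrow> real^'n \<Rightarrow> 'n \<Rightarrow> 'n \<Rightarrow> 'n \<Rightarrow> real" where
  "Ktil x \<epsilon> u k i j = Kc x \<epsilon> u k i j - (real CARD('n) / (real CARD('n) + 2)) *
      (hmet x \<epsilon> u i j * Tc x \<epsilon> u k + Tlow x \<epsilon> u i * kdelta k j + Tlow x \<epsilon> u j * kdelta k i)"

text \<open>Levi-Civita covariant derivative of a (1,2)-tensor field A (components A v k i j = A^k_ij):
  (\<nabla>^_{\<partial>l} A)^k_ij.\<close>
definition cov12 :: "(real^'n \<Rightarrow> real^'m) \<Rightarrow> real \<Rightarrow> (real^'n \<Rightarrow> 'n \<Rightarrow> 'n \<Rightarrow> 'n \<Rightarrow> real)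
     \<Rightarrow> real^'n \<Rightarrow> 'n \<Rightarrow> 'n \<Rightarrow> 'n \<Rightarrow> 'n \<Rightarrow> real" where
  "cov12 x \<epsilon> A u l k i j = pd (\<lambda>v. A v k i j) l u
      + (\<Sum>m\<in>UNIV. chr x \<epsilon> u k l m * A u m i j)
      - (\<Sum>m\<in>UNIV. chr x \<epsilon> u m l i * A u k m j)
      - (\<Sum>m\<in>UNIV. chr x \<epsilon> u m l j * A u k i m)"

definition covT :: "(real^'n \<Rightarrow> real^'m) \<Rightarrow> real \<Rightarrow> real^'n \<Rightarrow> 'n \<Rightarrow> 'n \<Rightarrow> real" where
  "covT x \<epsilon> u i j = pd (\<lambda>v. Tc x \<epsilon> v j) i u + (\<Sum>m\<in>UNIV. chr x \<epsilon> u j i m * Tc x \<epsilon> u m)"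

definition hform :: "(real^'n \<Rightarrow> real^'m) \<Rightarrow> real \<Rightarrow> real^'n \<Rightarrow> real^'n \<Rightarrow> real^'n \<Rightarrow> real" where
  "hform x \<epsilon> u a b = (\<Sum>i\<in>UNIV. \<Sum>j\<in>UNIV. hmet x \<epsilon> u i j * a$i * b$j)"

definition h_orthonormal_frame :: "(real^'n \<Rightarrow> real^'m) \<Rightarrow> real \<Rightarrow> real^'n \<Rightarrow> ('n \<Rightarrow> real^'n) \<Rightarrow> bool" where
  "h_orthonormal_frame x \<epsilon> u E \<longleftrightarrow> (\<forall>a b. hform x \<epsilon> u (E a) (E b) = kdelta a b)"

text \<open>K^k_{ij,l} = h((\<nabla>^_{e_l} K)(e_i,e_j), e_k).\<close>
definition Kder :: "(real^'n \<Rightarrow> real^'m) \<Rightarrow> real \<Rightarrow> real^'n \<Rightarrow> ('n \<Rightarrow> real^'n)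
     \<Rightarrow> 'n \<Rightarrow> 'n \<Rightarrow> 'n \<Rightarrow> 'n \<Rightarrow> real" where
  "Kder x \<epsilon> u E k i j l = (\<Sum>g\<in>UNIV. \<Sum>a\<in>UNIV. \<Sum>b\<in>UNIV. \<Sum>m\<in>UNIV. \<Sum>n\<in>UNIV.
      E l $ g * E i $ a * E j $ b * cov12 x \<epsilon> (Kc x \<epsilon>) u g m a b * hmet x \<epsilon> u m n * E k $ n)"

text \<open>T^j_{,i} = h(\<nabla>^_{e_i} T, e_j).\<close>
definition Tder :: "(real^'n \<Rightarrow> real^'m) \<Rightarrow> real \<Rightarrow> real^'n \<Rightarrow> ('n \<Rightarrow> real^'n) \<Rightarrow> 'n \<Rightarrow> 'n \<Rightarrow> real" where
  "Tder x \<epsilon> u E j i = (\<Sum>g\<in>UNIV. \<Sum>m\<in>UNIV. \<Sum>n\<in>UNIV.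
      E i $ g * covT x \<epsilon> u g m * hmet x \<epsilon> u m n * E j $ n)"

definition normsq_DK where
  "normsq_DK x \<epsilon> u E = (\<Sum>i\<in>UNIV. \<Sum>j\<in>UNIV. \<Sum>k\<in>UNIV. \<Sum>l\<in>UNIV. (Kder x \<epsilon> u E k i j l)^2)"

definition normsq_DT where
  "normsq_DT x \<epsilon> u E = (\<Sum>i\<in>UNIV. \<Sum>j\<in>UNIV. (Tder x \<epsilon> u E j i)^2)"

end

theory Submission
  imports Defs
begin

text \<open>
  Let \<open>A\<close> be the lowered covariant derivative of the difference tensor, \<open>A\<^sub>k\<^sub>i\<^sub>j\<^sub>l = K\<^sup>k\<^sub>i\<^sub>j\<^sub>,\<^sub>l\<close>
  in an orthonormal frame. The Codazzi equation of the centroaffine immersion makes the cubic form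
  \<open>h(K(X,Y),Z)\<close> totally symmetric, hence so is \<open>A\<close> in \<open>k, i, j\<close>, and its trace
  \<open>\<Sum>\<^sub>j A\<^sub>j\<^sub>i\<^sub>j\<^sub>l\<close> is \<open>n T\<^sup>i\<^sub>,\<^sub>l\<close>. The tensor
  \<open>C\<^sub>k\<^sub>i\<^sub>j\<^sub>l = n/(n+2) (T\<^sup>k\<^sub>,\<^sub>l \<delta>\<^sub>i\<^sub>j + T\<^sup>i\<^sub>,\<^sub>l \<delta>\<^sub>j\<^sub>k + T\<^sup>j\<^sub>,\<^sub>l \<delta>\<^sub>i\<^sub>k)\<close>
  is the orthogonal projection of \<open>A\<close> onto the pure-trace tensors: both \<open>\<langle>A, C\<rangle>\<close> and \<open>\<langle>C, C\<rangle>\<close>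
  equal \<open>3n\<^sup>2/(n+2) \<parallel>\<nabla>T\<parallel>\<^sup>2\<close>. Hence
  \<open>\<parallel>\<nabla>K\<parallel>\<^sup>2 = \<parallel>A - C\<parallel>\<^sup>2 + 3n\<^sup>2/(n+2) \<parallel>\<nabla>T\<parallel>\<^sup>2\<close>, and \<open>A - C\<close> is exactly
  \<open>\<nabla>K\<^sup>~\<close> written in the frame, so equality holds iff \<open>K\<^sup>~\<close> is parallel.

  Most of the work is in making the local coordinate model precise: the Gauss coefficients are
  obtained
    by Cramer's rule in the frame \<open>x, x\<^sub>1, \<dots>, x\<^sub>n\<close>, which makes them smooth, and the Codazzi
  equation comes from the symmetry of third partial derivatives of \<open>x\<close> (Schwarz).
\<close>

section \<open>Partial derivatives and smoothness\<close>

lemma pd_cong: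
  assumes "open U" "u \<in> U" "\<And>v. v \<in> U \<Longrightarrow> F v = G v"
  shows "pd F i u = pd G i u"
proof -
  have "(F has_derivative f') (at u) \<longleftrightarrow> (G has_derivative f') (at u)" for f'
    using has_derivative_transform_within_open[of F f' u UNIV U G]
      has_derivative_transform_within_open[of G f' u UNIV U F] assms by auto
  then show ?thesis unfolding pd_def frechet_derivative_def by simp
qed

lemma pdl_cong:
  assumes "open U" "\<And>v. v \<in> U \<Longrightarrow> F v = G v" "u \<in> U"
  shows "pdl F is u = pdl G is u"
  using assms(3)
proof (induction "is" arbitrary: u)
  case Nil
  then show ?case using assms by simp
next
  case (Cons i "is")
  then show ?case using pd_cong[OF assms(1) Cons(2), of "pdl F is" "pdl G is"] by simp
qed

lemma pdl_snoc: "pdl F (is @ [i]) = pdl (pd F i) is"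
  by (induction "is") auto

lemma pd_eqI:
  assumes "(F has_derivative F') (at u)"
  shows "pd F i u = F' (axis i 1)"
  using frechet_derivative_at[OF assms] unfolding pd_def by simp

lemma pd_add:
  assumes "F differentiable (at u)" "G differentiable (at u)"
  shows "pd (\<lambda>v. F v + G v) i u = pd F i u + pd G i u"
  using pd_eqI[OF has_derivative_add[OF assms[unfolded frechet_derivative_works]]]
  by (simp add: pd_def)

lemma pd_diff:
  assumes "F differentiable (at u)" "G differentiable (at u)"
  shows "pd (\<lambda>v. F v - G v) i u = pd F i u - pd G i u"
  using pd_eqI[OF has_derivative_diff[OF assms[unfolded frechet_derivative_works]]]
  by (simp add: pd_def)

lemma pd_scaleR:
  fixes F :: "real^'n \<Rightarrow> real" and G :: "real^'n \<Rightarrow> 'b::real_normed_vector"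
  assumes "F differentiable (at u)" "G differentiable (at u)"
  shows "pd (\<lambda>v. F v *\<^sub>R G v) i u = pd F i u *\<^sub>R G u + F u *\<^sub>R pd G i u"
  using pd_eqI[OF has_derivative_scaleR[OF assms[unfolded frechet_derivative_works]]]
  by (simp add: pd_def add.commute)

lemma pd_mult:
  fixes F G :: "real^'n \<Rightarrow> real"
  assumes "F differentiable (at u)" "G differentiable (at u)"
  shows "pd (\<lambda>v. F v * G v) i u = pd F i u * G u + F u * pd G i u"
  using pd_scaleR[OF assms] by simp

lemma pd_const: "pd (\<lambda>v. c) i u = 0"
  using pd_eqI[OF has_derivative_const[of c "at u"]] by simp

lemma pd_sum:
  assumes "finite S" "\<And>s. s \<in> S \<Longrightarrow> F s differentiable (at u)"
  shows "pd (\<lambda>v. \<Sum>s\<in>S. F s v) i u = (\<Sum>s\<in>S. pd (F s) i u)"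
proof -
  have "((\<lambda>v. \<Sum>s\<in>S. F s v) has_derivative (\<lambda>h. \<Sum>s\<in>S. frechet_derivative (F s) (at u) h)) (at u)"
    using assms frechet_derivative_works by (intro has_derivative_sum) auto
  from pd_eqI[OF this, of i] show ?thesis by (simp add: pd_def)
qed

lemma pd_inverse:
  fixes F :: "real^'n \<Rightarrow> real"
  assumes "F differentiable (at u)" "F u \<noteq> 0"
  shows "pd (\<lambda>v. inverse (F v)) i u = - (pd F i u * (inverse (F u) * inverse (F u)))"
  using pd_eqI[OF Deriv.has_derivative_inverse[OF assms(2) assms(1)[unfolded frechet_derivative_works]]]
  by (simp add: pd_def algebra_simps)

lemma pd_nth:
  fixes F :: "real^'n \<Rightarrow> real^'m"
  assumes "F differentiable (at u)"
  shows "pd (\<lambda>v. F v $ m) i u = pd F i u $ m"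
  using pd_eqI[OF bounded_linear.has_derivative[OF bounded_linear_vec_nth
        assms[unfolded frechet_derivative_works]]]
  by (simp add: pd_def)

definition smooth_upto :: "(real^'n) set \<Rightarrow> nat \<Rightarrow> (real^'n \<Rightarrow> 'b::real_normed_vector) \<Rightarrow> bool" where
  "smooth_upto U N F \<longleftrightarrow> (\<forall>is. length is \<le> N \<longrightarrow> pdl F is differentiable_on U)"

definition smooth_on :: "(real^'n) set \<Rightarrow> (real^'n \<Rightarrow> 'b::real_normed_vector) \<Rightarrow> bool" where
  "smooth_on U F \<longleftrightarrow> (\<forall>is. pdl F is differentiable_on U)"

lemma smooth_on_open_iff: "smooth_on_open F U \<longleftrightarrow> open U \<and> smooth_on U F"
  unfolding smooth_on_open_def smooth_on_def by simp

lemma smooth_on_iff_upto: "smooth_on U F \<longleftrightarrow> (\<forall>N. smooth_upto U N F)"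
  unfolding smooth_on_def smooth_upto_def by auto

lemma smooth_upto_0: "smooth_upto U 0 F \<longleftrightarrow> F differentiable_on U"
  unfolding smooth_upto_def by auto

lemma smooth_upto_Suc:
  "smooth_upto U (Suc N) F \<longleftrightarrow> F differentiable_on U \<and> (\<forall>i. smooth_upto U N (pd F i))"
proof
  assume F: "smooth_upto U (Suc N) F"
  have "pdl (pd F i) is differentiable_on U" if "length is \<le> N" for i "is"
    using F[unfolded smooth_upto_def, rule_format, of "is @ [i]"] that by (simp add: pdl_snoc)
  then show "F differentiable_on U \<and> (\<forall>i. smooth_upto U N (pd F i))"
    using F[unfolded smooth_upto_def, rule_format, of "[]"] by (simp add: smooth_upto_def)
next
  assume F: "F differentiable_on U \<and> (\<forall>i. smooth_upto U N (pd F i))"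
  have "pdl F is differentiable_on U" if "length is \<le> Suc N" for "is"
    using that F by (cases "is" rule: rev_cases) (auto simp: smooth_upto_def pdl_snoc)
  then show "smooth_upto U (Suc N) F" unfolding smooth_upto_def by blast
qed

lemma smooth_upto_mono: "smooth_upto U N F \<Longrightarrow> M \<le> N \<Longrightarrow> smooth_upto U M F"
  unfolding smooth_upto_def by auto

lemma smooth_on_differentiable_on: "smooth_on U F \<Longrightarrow> F differentiable_on U"
  unfolding smooth_on_def by (metis pdl.simps(1))

lemma smooth_on_pd: "smooth_on U F \<Longrightarrow> smooth_on U (pd F i)"
  unfolding smooth_on_def by (metis pdl_snoc)

lemma differentiable_on_cong_open:
  assumes "open U" "\<And>v. v \<in> U \<Longrightarrow> F v = G v" "F differentiable_on U"
  shows "G differentiable_on U"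
proof -
  have "G differentiable (at u)" if "u \<in> U" for u
  proof -
    have "F differentiable (at u)"
      using assms that differentiable_on_eq_differentiable_at by blast
    then obtain f' where "(F has_derivative f') (at u)" unfolding differentiable_def by blast
    then have "(G has_derivative f') (at u)"
      using has_derivative_transform_within_open[of F f' u UNIV U G] assms that by auto
    then show ?thesis unfolding differentiable_def by blast
  qed
  then show ?thesis using assms(1) differentiable_on_eq_differentiable_at by blast
qed

lemma smooth_upto_cong:
  assumes "open U" "\<And>v. v \<in> U \<Longrightarrow> F v = G v" "smooth_upto U N F"
  shows "smooth_upto U N G"
  unfolding smooth_upto_def
proof (intro allI impI)
  fix "is" :: "'a list"
  assume "length is \<le> N"
  then have "pdl F is differentiable_on U" using assms(3) unfolding smooth_upto_def by blast
  then show "pdl G is differentiable_on U"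
    by (rule differentiable_on_cong_open[OF assms(1), rotated]) (rule pdl_cong[OF assms(1,2)])
qed

lemma smooth_on_cong:
  assumes "open U" "\<And>v. v \<in> U \<Longrightarrow> F v = G v" "smooth_on U F"
  shows "smooth_on U G"
  using smooth_upto_cong[of U F G, OF assms(1,2)] assms(3) unfolding smooth_on_iff_upto by blast

lemma differentiable_on_openD: "open U \<Longrightarrow> F differentiable_on U \<Longrightarrow> u \<in> U \<Longrightarrow> F differentiable (at u)"
  using differentiable_on_eq_differentiable_at by blast

lemma smooth_on_differentiable_at:
  "open U \<Longrightarrow> smooth_on U F \<Longrightarrow> u \<in> U \<Longrightarrow> F differentiable (at u)"
  using differentiable_on_eq_differentiable_at smooth_on_differentiable_on by blast

context
  fixes U :: "(real^'n) set"
  assumes open_U: "open U"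
begin

lemma smooth_upto_const: "smooth_upto U N (\<lambda>v. c)"
proof (induction N arbitrary: c)
  case (Suc N)
  have "pd (\<lambda>v::real^'n. c) i = (\<lambda>v. 0)" for i by (rule ext) (rule pd_const)
  then show ?case using Suc by (simp add: smooth_upto_Suc)
qed (simp add: smooth_upto_0)

lemma smooth_upto_add:
  "smooth_upto U N F \<Longrightarrow> smooth_upto U N G \<Longrightarrow> smooth_upto U N (\<lambda>v. F v + G v)"
proof (induction N arbitrary: F G)
  case (Suc N)
  have dF: "F differentiable_on U" and dG: "G differentiable_on U"
    using Suc.prems unfolding smooth_upto_Suc by auto
  have "smooth_upto U N (pd (\<lambda>v. F v + G v) i)" for i
  proof (rule smooth_upto_cong[OF open_U])
    show "smooth_upto U N (\<lambda>v. pd F i v + pd G i v)"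
      using Suc unfolding smooth_upto_Suc by blast
    show "pd F i v + pd G i v = pd (\<lambda>v. F v + G v) i v" if "v \<in> U" for v
      using pd_add[OF differentiable_on_openD[OF open_U dF that] differentiable_on_openD[OF open_U dG that]]
      by simp
  qed
  then show ?case using dF dG by (simp add: smooth_upto_Suc differentiable_on_add)
qed (simp add: smooth_upto_0 differentiable_on_add)

lemma smooth_upto_scaleR:
  fixes F :: "real^'n \<Rightarrow> real" and G :: "real^'n \<Rightarrow> 'b::real_normed_vector"
  shows "smooth_upto U N F \<Longrightarrow> smooth_upto U N G \<Longrightarrow> smooth_upto U N (\<lambda>v. F v *\<^sub>R G v)"
proof (induction N arbitrary: F G)
  case (Suc N)
  have dF: "F differentiable_on U" and dG: "G differentiable_on U"
    using Suc.prems unfolding smooth_upto_Suc by auto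
  have "smooth_upto U N (pd (\<lambda>v. F v *\<^sub>R G v) i)" for i
  proof (rule smooth_upto_cong[OF open_U])
    have "smooth_upto U N F" "smooth_upto U N G" "smooth_upto U N (pd F i)" "smooth_upto U N (pd G i)"
      using Suc.prems smooth_upto_mono[of U "Suc N" _ N] unfolding smooth_upto_Suc by auto
    then show "smooth_upto U N (\<lambda>v. pd F i v *\<^sub>R G v + F v *\<^sub>R pd G i v)"
      by (intro smooth_upto_add Suc.IH)
    show "pd F i v *\<^sub>R G v + F v *\<^sub>R pd G i v = pd (\<lambda>v. F v *\<^sub>R G v) i v" if "v \<in> U" for v
      using pd_scaleR[OF differentiable_on_openD[OF open_U dF that] differentiable_on_openD[OF open_U dG that]]
      by simp
  qed
  then show ?case using dF dG by (simp add: smooth_upto_Suc differentiable_on_scaleR)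
qed (simp add: smooth_upto_0 differentiable_on_scaleR)

lemma smooth_upto_nth:
  fixes F :: "real^'n \<Rightarrow> real^'m"
  shows "smooth_upto U N F \<Longrightarrow> smooth_upto U N (\<lambda>v. F v $ m)"
proof (induction N arbitrary: F)
  have nth: "(\<lambda>v. F v $ m) differentiable_on U" if "F differentiable_on U" for F :: "real^'n \<Rightarrow> real^'m"
    using that bounded_linear.has_derivative[OF bounded_linear_vec_nth]
    unfolding differentiable_on_def differentiable_def by blast
  {
    case 0
    then show ?case using nth by (simp add: smooth_upto_0)
  next
    case (Suc N)
    have dF: "F differentiable_on U" using Suc.prems unfolding smooth_upto_Suc by auto
    have "smooth_upto U N (pd (\<lambda>v. F v $ m) i)" for i
    proof (rule smooth_upto_cong[OF open_U])
      show "smooth_upto U N (\<lambda>v. pd F i v $ m)"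
        using Suc unfolding smooth_upto_Suc by blast
      show "pd F i v $ m = pd (\<lambda>v. F v $ m) i v" if "v \<in> U" for v
        using pd_nth[OF differentiable_on_openD[OF open_U dF that]] by simp
    qed
    then show ?case using nth[OF dF] by (simp add: smooth_upto_Suc)
  }
qed

lemma smooth_upto_inverse:
  fixes F :: "real^'n \<Rightarrow> real"
  assumes F: "smooth_on U F" and nz: "\<And>v. v \<in> U \<Longrightarrow> F v \<noteq> 0"
  shows "smooth_upto U N (\<lambda>v. inverse (F v))"
proof (induction N)
  have dF: "F differentiable_on U" using F smooth_on_differentiable_on by blast
  have dI: "(\<lambda>v. inverse (F v)) differentiable_on U"
    using dF nz by (auto simp: differentiable_on_def intro: differentiable_inverse)
  {
    case 0
    then show ?case using dI by (simp add: smooth_upto_0)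
  next
    case (Suc N)
    have "smooth_upto U N (pd (\<lambda>v. inverse (F v)) i)" for i
    proof (rule smooth_upto_cong[OF open_U])
      have "smooth_upto U N (pd F i)" using F smooth_on_pd smooth_on_iff_upto by blast
      then show "smooth_upto U N (\<lambda>v. (-1) *\<^sub>R (pd F i v *\<^sub>R (inverse (F v) *\<^sub>R inverse (F v))))"
        using Suc by (intro smooth_upto_scaleR smooth_upto_const)
      show "(-1) *\<^sub>R (pd F i v *\<^sub>R (inverse (F v) *\<^sub>R inverse (F v))) = pd (\<lambda>v. inverse (F v)) i v"
        if "v \<in> U" for v
        using pd_inverse[OF differentiable_on_openD[OF open_U dF that] nz[OF that]] by simp
    qed
    then show ?case using dI by (simp add: smooth_upto_Suc)
  }
qed

lemma smooth_on_const: "smooth_on U (\<lambda>v. c)"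
  unfolding smooth_on_iff_upto by (auto intro: smooth_upto_const)

lemma smooth_on_add: "smooth_on U F \<Longrightarrow> smooth_on U G \<Longrightarrow> smooth_on U (\<lambda>v. F v + G v)"
  unfolding smooth_on_iff_upto by (auto intro: smooth_upto_add)

lemma smooth_on_scaleR:
  "smooth_on U F \<Longrightarrow> smooth_on U G \<Longrightarrow> smooth_on U (\<lambda>v. F v *\<^sub>R G v)"
  unfolding smooth_on_iff_upto by (auto intro: smooth_upto_scaleR)

lemma smooth_on_mult: "smooth_on U F \<Longrightarrow> smooth_on U G \<Longrightarrow> smooth_on U (\<lambda>v. F v * G v :: real)"
  using smooth_on_scaleR[of F G] by simp

lemma smooth_on_diff: "smooth_on U F \<Longrightarrow> smooth_on U G \<Longrightarrow> smooth_on U (\<lambda>v. F v - G v)"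
  using smooth_on_add[of F "\<lambda>v. (-1) *\<^sub>R G v"] smooth_on_scaleR[OF smooth_on_const, of G "-1"]
  by simp

lemma smooth_on_nth: "smooth_on U (F :: real^'n \<Rightarrow> real^'m) \<Longrightarrow> smooth_on U (\<lambda>v. F v $ m)"
  unfolding smooth_on_iff_upto by (auto intro: smooth_upto_nth)

lemma smooth_on_inverse:
  "smooth_on U F \<Longrightarrow> (\<And>v. v \<in> U \<Longrightarrow> F v \<noteq> 0) \<Longrightarrow> smooth_on U (\<lambda>v. inverse (F v) :: real)"
  unfolding smooth_on_iff_upto[of U "\<lambda>v. inverse (F v)"] by (auto intro: smooth_upto_inverse)

lemma smooth_on_divide:
  fixes F G :: "real^'n \<Rightarrow> real"
  assumes "smooth_on U F" "smooth_on U G" "\<And>v. v \<in> U \<Longrightarrow> G v \<noteq> 0"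
  shows "smooth_on U (\<lambda>v. F v / G v)"
  unfolding divide_inverse using assms by (intro smooth_on_mult smooth_on_inverse)

lemma smooth_on_sum:
  "finite S \<Longrightarrow> (\<And>s. s \<in> S \<Longrightarrow> smooth_on U (F s)) \<Longrightarrow> smooth_on U (\<lambda>v. \<Sum>s\<in>S. F s v)"
  by (induction S rule: finite_induct) (auto intro: smooth_on_const smooth_on_add)

lemma smooth_on_prod:
  "finite S \<Longrightarrow> (\<And>s. s \<in> S \<Longrightarrow> smooth_on U (F s)) \<Longrightarrow> smooth_on U (\<lambda>v. \<Prod>s\<in>S. F s v :: real)"
  by (induction S rule: finite_induct) (auto intro: smooth_on_const smooth_on_mult)

lemma smooth_on_inner:
  fixes F G :: "real^'n \<Rightarrow> real^'m"
  shows "smooth_on U F \<Longrightarrow> smooth_on U G \<Longrightarrow> smooth_on U (\<lambda>v. inner (F v) (G v))"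
  unfolding inner_vec_def inner_real_def by (intro smooth_on_sum smooth_on_mult smooth_on_nth) auto

lemma smooth_on_det:
  fixes F :: "'k::finite \<Rightarrow> 'k \<Rightarrow> real^'n \<Rightarrow> real"
  assumes "\<And>i j. smooth_on U (F i j)"
  shows "smooth_on U (\<lambda>v. det (\<chi> i j. F i j v))"
  unfolding det_def using assms
  by (auto intro!: smooth_on_sum smooth_on_mult smooth_on_const smooth_on_prod finite_permutations)

end

section \<open>Symmetry of second partial derivatives\<close>

lemma has_real_derivative_along_line:
  fixes f :: "real^'n \<Rightarrow> real"
  assumes "f differentiable (at (p + t *\<^sub>R e))"
  shows "((\<lambda>s. f (p + s *\<^sub>R e)) has_real_derivative frechet_derivative f (at (p + t *\<^sub>R e)) e) (at t)"
proof -
  let ?D = "frechet_derivative f (at (p + t *\<^sub>R e))"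
  have fD: "(f has_derivative ?D) (at (p + t *\<^sub>R e))" using assms frechet_derivative_works by blast
  have "((\<lambda>s. p + s *\<^sub>R e) has_derivative (\<lambda>s. s *\<^sub>R e)) (at t)"
    by (auto intro!: derivative_eq_intros)
  from has_derivative_compose[OF this fD]
  have "((\<lambda>s. f (p + s *\<^sub>R e)) has_derivative (\<lambda>s. ?D (s *\<^sub>R e))) (at t)" by simp
  moreover have "(\<lambda>s. ?D (s *\<^sub>R e)) = (*) (?D e)"
    by (rule ext) (simp add: linear_scale[OF has_derivative_linear[OF fD]])
  ultimately show ?thesis by (simp add: has_field_derivative_def)
qed

lemma second_difference_mvt:
  fixes f :: "real^'n \<Rightarrow> real"
  assumes "open U" "f differentiable_on U" "0 < h"
    and square: "\<And>s t. 0 \<le> s \<Longrightarrow> s \<le> h \<Longrightarrow> 0 \<le> t \<Longrightarrow> t \<le> h \<Longrightarrow> u + (s *\<^sub>R e1 + t *\<^sub>R e2) \<in> U"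
  obtains t where "0 < t" "t < h"
    "f (u + h *\<^sub>R e1 + h *\<^sub>R e2) - f (u + h *\<^sub>R e1) - f (u + h *\<^sub>R e2) + f u
       = h * (frechet_derivative f (at (u + (t *\<^sub>R e1 + h *\<^sub>R e2))) e1
              - frechet_derivative f (at (u + (t *\<^sub>R e1 + 0 *\<^sub>R e2))) e1)"
proof -
  have "((\<lambda>s. f (u + h *\<^sub>R e2 + s *\<^sub>R e1) - f (u + s *\<^sub>R e1)) has_real_derivative
      (frechet_derivative f (at (u + h *\<^sub>R e2 + t *\<^sub>R e1)) e1
        - frechet_derivative f (at (u + t *\<^sub>R e1)) e1)) (at t)"
    if "0 \<le> t" "t \<le> h" for t
  proof -
    have "u + h *\<^sub>R e2 + t *\<^sub>R e1 \<in> U" "u + t *\<^sub>R e1 \<in> U"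
      using square[of t h] square[of t 0] that assms(3) by (simp_all add: algebra_simps)
    then show ?thesis
      using differentiable_on_openD[OF assms(1,2)] by (intro DERIV_diff has_real_derivative_along_line) auto
  qed
  from MVT2[OF assms(3) this] that show ?thesis by (auto simp: algebra_simps)
qed

lemma norm_square_le:
  assumes "norm e1 = 1" "norm e2 = 1" "0 \<le> s" "s \<le> h" "0 \<le> t" "t \<le> h"
  shows "norm (s *\<^sub>R e1 + t *\<^sub>R e2) \<le> 2 * h"
  using norm_triangle_ineq[of "s *\<^sub>R e1" "t *\<^sub>R e2"] assms by simp

text \<open>The mean value theorem along \<open>e\<^sub>i\<close>, followed by differentiability of \<open>\<partial>\<^sub>if\<close> at \<open>u\<close>,
  shows that the second difference quotient tends to \<open>\<partial>\<^sub>j\<partial>\<^sub>if(u)\<close>.\<close>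

lemma second_difference_approx:
  fixes f :: "real^'n \<Rightarrow> real"
  assumes open_U: "open U" and u: "u \<in> U" and df: "f differentiable_on U"
    and L: "(pd f i has_derivative L) (at u)" and \<epsilon>: "\<epsilon> > 0"
  obtains \<delta> where "\<delta> > 0" "\<And>h. 0 < h \<Longrightarrow> h < \<delta> \<Longrightarrow>
    \<bar>f (u + h *\<^sub>R axis i 1 + h *\<^sub>R axis j 1) - f (u + h *\<^sub>R axis i 1) - f (u + h *\<^sub>R axis j 1) + f u
       - h\<^sup>2 * L (axis j 1)\<bar> \<le> 4 * \<epsilon> * h\<^sup>2"
proof -
  define e1 where "e1 = axis i (1::real)"
  define e2 where "e2 = axis j (1::real)"
  define g where "g = pd f i"
  have norm_e: "norm e1 = 1" "norm e2 = 1" unfolding e1_def e2_def by (simp_all add: norm_axis_1)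
  have fd_e1: "frechet_derivative f (at v) e1 = g v" for v unfolding g_def e1_def pd_def ..
  obtain r where r: "r > 0" "ball u r \<subseteq> U" using open_U u open_contains_ball by blast
  obtain \<delta>1 where \<delta>1: "\<delta>1 > 0"
    "\<And>y. norm (y - u) < \<delta>1 \<Longrightarrow> norm (g y - g u - L (y - u)) \<le> \<epsilon> * norm (y - u)"
    using L \<epsilon> unfolding has_derivative_at_alt g_def by blast
  define \<delta> where "\<delta> = min r \<delta>1 / 2"
  have "\<bar>f (u + h *\<^sub>R e1 + h *\<^sub>R e2) - f (u + h *\<^sub>R e1) - f (u + h *\<^sub>R e2) + f u - h\<^sup>2 * L e2\<bar>
      \<le> 4 * \<epsilon> * h\<^sup>2" if h: "0 < h" "h < \<delta>" for h
  proof -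
    have small: "norm (s *\<^sub>R e1 + t *\<^sub>R e2) < min r \<delta>1"
      if "0 \<le> s" "s \<le> h" "0 \<le> t" "t \<le> h" for s t
      using norm_square_le[OF norm_e that] h unfolding \<delta>_def by simp
    have square: "u + (s *\<^sub>R e1 + t *\<^sub>R e2) \<in> U" if "0 \<le> s" "s \<le> h" "0 \<le> t" "t \<le> h" for s t
      using small[OF that]
      by (intro subsetD[OF r(2)]) (simp add: dist_norm norm_minus_commute[of _ "t *\<^sub>R e2"] add.commute)
    have approx: "\<bar>g (u + (s *\<^sub>R e1 + t *\<^sub>R e2)) - g u - L (s *\<^sub>R e1 + t *\<^sub>R e2)\<bar> \<le> \<epsilon> * (2 * h)"
      if "0 \<le> s" "s \<le> h" "0 \<le> t" "t \<le> h" for s t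
      using \<delta>1(2)[of "u + (s *\<^sub>R e1 + t *\<^sub>R e2)"] small[OF that] norm_square_le[OF norm_e that] \<epsilon>
      by (smt (verit) add_diff_cancel_left' mult_left_mono real_norm_def)
    obtain t where t: "0 < t" "t < h"
      "f (u + h *\<^sub>R e1 + h *\<^sub>R e2) - f (u + h *\<^sub>R e1) - f (u + h *\<^sub>R e2) + f u
         = h * (g (u + (t *\<^sub>R e1 + h *\<^sub>R e2)) - g (u + (t *\<^sub>R e1 + 0 *\<^sub>R e2)))"
      using second_difference_mvt[OF open_U df h(1) square] unfolding fd_e1 by blast
    have "L (t *\<^sub>R e1 + h *\<^sub>R e2) - L (t *\<^sub>R e1 + 0 *\<^sub>R e2) = h * L e2"
      using has_derivative_linear[OF L] by (simp add: linear_add linear_scale)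
    then have "\<bar>g (u + (t *\<^sub>R e1 + h *\<^sub>R e2)) - g (u + (t *\<^sub>R e1 + 0 *\<^sub>R e2)) - h * L e2\<bar> \<le> 4 * \<epsilon> * h"
      using approx[of t h] approx[of t 0] t h by (simp add: abs_le_iff)
    then have "h * \<bar>g (u + (t *\<^sub>R e1 + h *\<^sub>R e2)) - g (u + (t *\<^sub>R e1 + 0 *\<^sub>R e2)) - h * L e2\<bar> \<le> 4 * \<epsilon> * h\<^sup>2"
      using h mult_left_mono by (fastforce simp: power2_eq_square mult_ac)
    moreover have "h * (g (u + (t *\<^sub>R e1 + h *\<^sub>R e2)) - g (u + (t *\<^sub>R e1 + 0 *\<^sub>R e2))) - h\<^sup>2 * L e2
        = h * (g (u + (t *\<^sub>R e1 + h *\<^sub>R e2)) - g (u + (t *\<^sub>R e1 + 0 *\<^sub>R e2)) - h * L e2)"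
      by (simp add: power2_eq_square algebra_simps)
    ultimately show ?thesis unfolding t(3) using h by (simp add: abs_mult)
  qed
  moreover have "\<delta> > 0" unfolding \<delta>_def using r \<delta>1 by simp
  ultimately show ?thesis using that unfolding e1_def e2_def by blast
qed

text \<open>The second difference is symmetric in \<open>i\<close> and \<open>j\<close>, so it approximates both mixed
  partials at once.\<close>

lemma pd_pd_commute:
  fixes f :: "real^'n \<Rightarrow> real"
  assumes open_U: "open U" and u: "u \<in> U" and df: "f differentiable_on U"
    and "pd f i differentiable (at u)" "pd f j differentiable (at u)"
  shows "pd (pd f i) j u = pd (pd f j) i u"
proof -
  define L1 where "L1 = frechet_derivative (pd f i) (at u)"
  define L2 where "L2 = frechet_derivative (pd f j) (at u)"
  have L1: "(pd f i has_derivative L1) (at u)" and L2: "(pd f j has_derivative L2) (at u)"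
    using assms(4,5) frechet_derivative_works unfolding L1_def L2_def by blast+
  have close: "\<bar>L1 (axis j 1) - L2 (axis i 1)\<bar> \<le> 8 * \<epsilon>" if \<epsilon>: "\<epsilon> > 0" for \<epsilon>
  proof -
    obtain \<delta>1 where \<delta>1: "\<delta>1 > 0" "\<And>h. 0 < h \<Longrightarrow> h < \<delta>1 \<Longrightarrow>
      \<bar>f (u + h *\<^sub>R axis i 1 + h *\<^sub>R axis j 1) - f (u + h *\<^sub>R axis i 1) - f (u + h *\<^sub>R axis j 1) + f u
         - h\<^sup>2 * L1 (axis j 1)\<bar> \<le> 4 * \<epsilon> * h\<^sup>2"
      using second_difference_approx[OF open_U u df L1 \<epsilon>] by blast
    obtain \<delta>2 where \<delta>2: "\<delta>2 > 0" "\<And>h. 0 < h \<Longrightarrow> h < \<delta>2 \<Longrightarrow>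
      \<bar>f (u + h *\<^sub>R axis j 1 + h *\<^sub>R axis i 1) - f (u + h *\<^sub>R axis j 1) - f (u + h *\<^sub>R axis i 1) + f u
         - h\<^sup>2 * L2 (axis i 1)\<bar> \<le> 4 * \<epsilon> * h\<^sup>2"
      using second_difference_approx[OF open_U u df L2 \<epsilon>] by blast
    define h where "h = min \<delta>1 \<delta>2 / 2"
    have h: "0 < h" "h < \<delta>1" "h < \<delta>2" unfolding h_def using \<delta>1 \<delta>2 by auto
    have "\<bar>h\<^sup>2 * L1 (axis j 1) - h\<^sup>2 * L2 (axis i 1)\<bar> \<le> h\<^sup>2 * (8 * \<epsilon>)"
      using \<delta>1(2)[OF h(1,2)] \<delta>2(2)[OF h(1,3)] unfolding abs_le_iff
      by (simp add: algebra_simps)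
    then have "h\<^sup>2 * \<bar>L1 (axis j 1) - L2 (axis i 1)\<bar> \<le> h\<^sup>2 * (8 * \<epsilon>)"
      by (simp add: abs_mult right_diff_distrib[symmetric])
    then show ?thesis using h by simp
  qed
  have "L1 (axis j 1) = L2 (axis i 1)"
    using close[of "\<bar>L1 (axis j 1) - L2 (axis i 1)\<bar> / 16"] by force
  then show ?thesis unfolding L1_def L2_def pd_def .
qed

lemma pd_pd_commute_vec:
  fixes F :: "real^'n \<Rightarrow> real^'m"
  assumes open_U: "open U" and F: "smooth_on U F" and u: "u \<in> U"
  shows "pd (pd F i) j u = pd (pd F j) i u"
proof -
  have component: "pd (pd F i) j u $ m = pd (pd (\<lambda>v. F v $ m) i) j u" for i j m
  proof -
    have "pd (pd F i) j u $ m = pd (\<lambda>v. pd F i v $ m) j u"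
      using pd_nth[OF smooth_on_differentiable_at[OF open_U smooth_on_pd[OF F] u]] by simp
    also have "\<dots> = pd (pd (\<lambda>v. F v $ m) i) j u"
      by (rule pd_cong[OF open_U u]) (use pd_nth[OF smooth_on_differentiable_at[OF open_U F]] in auto)
    finally show ?thesis .
  qed
  have "pd (pd (\<lambda>v. F v $ m) i) j u = pd (pd (\<lambda>v. F v $ m) j) i u" for m
  proof -
    have Fm: "smooth_on U (\<lambda>v. F v $ m)" by (rule smooth_on_nth[OF open_U F])
    show ?thesis
      using smooth_on_differentiable_at[OF open_U smooth_on_pd[OF Fm] u]
      by (intro pd_pd_commute[OF open_U u smooth_on_differentiable_on[OF Fm]])
  qed
  then show ?thesis using component by (simp add: vec_eq_iff)
qed

lemma sum_UNIV_option: "(\<Sum>a\<in>(UNIV :: 'a::finite option set). f a) = f None + (\<Sum>k\<in>UNIV. f (Some k))"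
proof -
  have "(UNIV :: 'a option set) = insert None (range Some)" by (rule UNIV_option_conv)
  moreover have "sum f (insert None (range Some)) = f None + sum f (range Some)"
    by (rule sum.insert) auto
  ultimately have "(\<Sum>a\<in>(UNIV :: 'a option set). f a) = f None + (\<Sum>a\<in>range Some. f a)"
    by simp
  also have "(\<Sum>a\<in>range Some. f a) = (\<Sum>k\<in>UNIV. f (Some k))"
    by (simp add: sum.reindex)
  finally show ?thesis .
qed

lemma matrix_inv_mult:
  fixes A :: "real^'n^'n"
  assumes "invertible A"
  shows "A ** matrix_inv A = mat 1" "matrix_inv A ** A = mat 1"
  using someI_ex[OF assms[unfolded invertible_def]] unfolding matrix_inv_def by auto

lemma det_nonzero_if_ker_trivial:
  fixes A :: "real^'n^'n"
  assumes "\<And>c. A *v c = 0 \<Longrightarrow> c = 0"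
  shows "det A \<noteq> 0"
proof -
  have "\<exists>B. B ** A = mat 1" using assms matrix_left_invertible_ker by blast
  then have "invertible A" using invertible_left_inverse by blast
  then show ?thesis using invertible_det_nz by blast
qed

lemma matrix_inv_nth_cramer:
  fixes A :: "real^'n^'n"
  assumes d: "det A \<noteq> 0"
  shows "matrix_inv A $ i $ j = det (\<chi> a b. if b = i then (if a = j then 1 else 0) else A $ a $ b) / det A"
proof -
  have inv: "invertible A" using d invertible_det_nz by blast
  define y where "y = (\<chi> a. matrix_inv A $ a $ j)"
  have "A *v y = (\<chi> a. if a = j then 1 else 0)"
    using matrix_inv_mult(1)[OF inv] unfolding y_def
    by (auto simp: vec_eq_iff matrix_vector_mult_def matrix_matrix_mult_def mat_def)
  then have "y = (\<chi> k. det (\<chi> a b. if b = k then (\<chi> a. if a = j then 1 else 0) $ a else A $ a $ b) / det A)"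
    using cramer[OF d] by blast
  moreover have "(\<chi> a b. if b = i then (\<chi> a. if a = j then 1 else 0) $ a else A $ a $ b)
     = (\<chi> a b. if b = i then (if a = j then 1 else (0::real)) else A $ a $ b)"
    by (simp add: vec_eq_iff)
  ultimately show ?thesis unfolding y_def by (auto simp: vec_eq_iff)
qed

lemma sum_kdelta_mult[simp]: "(\<Sum>l\<in>UNIV. kdelta (n::'a::finite) l * f l) = (f n :: real)"
proof -
  have "(\<Sum>l\<in>UNIV. kdelta n l * f l) = (\<Sum>l\<in>UNIV. if n = l then f l else 0)"
    by (rule sum.cong) (auto simp: kdelta_def)
  then show ?thesis by (simp add: sum.delta')
qed

lemma sum_mult_kdelta[simp]: "(\<Sum>l\<in>UNIV. f l * kdelta l (n::'a::finite)) = (f n :: real)"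
  using sum_kdelta_mult[of n f] by (simp add: kdelta_def mult.commute eq_commute)

lemma sum_mult_kdelta'[simp]: "(\<Sum>l\<in>UNIV. f l * kdelta (n::'a::finite) l) = (f n :: real)"
  using sum_kdelta_mult[of n f] by (simp add: mult.commute)

lemma kdelta_sym: "kdelta a b = kdelta b a" by (simp add: kdelta_def)

lemma sum_mult_sum_swap:
  "(\<Sum>m\<in>A. (\<Sum>q\<in>B. f q * g m q) * h m) = (\<Sum>q\<in>B. f q * (\<Sum>m\<in>A. g m q * h m :: real))"
proof -
  have "(\<Sum>m\<in>A. (\<Sum>q\<in>B. f q * g m q) * h m) = (\<Sum>m\<in>A. \<Sum>q\<in>B. f q * (g m q * h m))"
    by (simp add: sum_distrib_right mult.assoc)
  also have "\<dots> = (\<Sum>q\<in>B. \<Sum>m\<in>A. f q * (g m q * h m))" by (rule sum.swap)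
  finally show ?thesis by (simp add: sum_distrib_left)
qed

section \<open>The Gauss and Codazzi equations in a chart\<close>

locale centroaffine_chart =
  fixes x :: "real^'n \<Rightarrow> real^'m" and U :: "(real^'n) set" and \<epsilon> :: real
  assumes dim_ambient: "CARD('m) = CARD('n) + 1" and open_U: "open U" and smooth_x: "smooth_on U x"
    and transversal: "\<And>u. u \<in> U \<Longrightarrow> centroaffine_at x u" and eps_sign: "\<epsilon> = 1 \<or> \<epsilon> = -1"
    and h_pos: "\<And>u. u \<in> U \<Longrightarrow> hpos x \<epsilon> u"
begin

text \<open>The frame \<open>x, x\<^sub>1, \<dots>, x\<^sub>n\<close> of \<open>\<real>\<^sup>n\<^sup>+\<^sup>1\<close> along the chart, indexed by
  \<open>'n option\<close> with \<open>None\<close> standing for the position vector.\<close>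

definition frame_vec :: "real^'n \<Rightarrow> 'n option \<Rightarrow> real^'m" where
  "frame_vec u a = (case a of None \<Rightarrow> x u | Some k \<Rightarrow> pd x k u)"

definition gram :: "real^'n \<Rightarrow> real^'n option^'n option" where
  "gram u = (\<chi> a b. inner (frame_vec u a) (frame_vec u b))"

text \<open>Coordinates in this frame are given by Cramer's rule, so they inherit smoothness.\<close>

definition frame_coord :: "(real^'n \<Rightarrow> real^'m) \<Rightarrow> 'n option \<Rightarrow> real^'n \<Rightarrow> real" where
  "frame_coord W a u = det (\<chi> i j. if j = a then inner (frame_vec u i) (W u)
      else inner (frame_vec u i) (frame_vec u j)) / det (gram u)"

lemma frame_vec_independent:
  assumes u: "u \<in> U" and s: "(\<Sum>a\<in>UNIV. c a *\<^sub>R frame_vec u a) = 0"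
  shows "c a = 0"
proof -
  have "c None *\<^sub>R x u + (\<Sum>k\<in>UNIV. c (Some k) *\<^sub>R pd x k u) = 0"
    using s by (simp add: sum_UNIV_option frame_vec_def)
  then have "c None = 0 \<and> (\<forall>k. c (Some k) = 0)"
    using transversal[OF u, unfolded centroaffine_at_def, rule_format, of "c None" "\<lambda>k. c (Some k)"]
    by simp
  then show ?thesis by (cases a) auto
qed

lemma inj_frame_vec:
  assumes u: "u \<in> U" shows "inj (frame_vec u)"
proof (rule injI)
  fix a b assume e: "frame_vec u a = frame_vec u b"
  show "a = b"
  proof (rule ccontr)
    assume ab: "a \<noteq> b"
    define c where "c = (\<lambda>z. if z = a then 1 else if z = b then -1 else (0::real))"
    have "(\<Sum>z\<in>UNIV. c z *\<^sub>R frame_vec u z) = (\<Sum>z\<in>{a,b}. c z *\<^sub>R frame_vec u z)"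
      by (rule sum.mono_neutral_right) (auto simp: c_def)
    also have "\<dots> = 0" using ab e by (simp add: c_def)
    finally have "c a = 0" using frame_vec_independent[OF u] by blast
    then show False by (simp add: c_def)
  qed
qed

lemma frame_vec_spanning:
  assumes u: "u \<in> U"
  shows "\<exists>c. w = (\<Sum>a\<in>UNIV. c a *\<^sub>R frame_vec u a)"
proof -
  let ?B = "range (frame_vec u)"
  have inj: "inj (frame_vec u)" by (rule inj_frame_vec[OF u])
  have fin: "finite ?B" by simp
  have "independent ?B"
    unfolding eucl.independent_explicit
  proof (intro conjI allI impI ballI)
    show "finite ?B" by simp
    fix c v assume s: "(\<Sum>v\<in>?B. c v *\<^sub>R v) = 0" and v: "v \<in> ?B"
    have "(\<Sum>v\<in>?B. c v *\<^sub>R v) = (\<Sum>a\<in>UNIV. c (frame_vec u a) *\<^sub>R frame_vec u a)"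
      using inj by (simp add: sum.reindex)
    then have "\<And>a. c (frame_vec u a) = 0" using s frame_vec_independent[OF u, of "\<lambda>a. c (frame_vec u a)"]
      by simp
    then show "c v = 0" using v by auto
  qed
  moreover have "card ?B = CARD('m)"
    using inj dim_ambient by (simp add: card_image)
  moreover have "dim (UNIV :: (real^'m) set) = CARD('m)"
    by (simp add: eucl.dim_UNIV DIM_cart)
  ultimately have "UNIV \<subseteq> span ?B"
    using eucl.card_ge_dim_independent[of ?B UNIV] by simp
  then have "w \<in> span ?B" by auto
  then obtain f where "w = (\<Sum>v\<in>?B. f v *\<^sub>R v)"
    using real_vector.span_finite[OF fin] by auto
  also have "\<dots> = (\<Sum>a\<in>UNIV. f (frame_vec u a) *\<^sub>R frame_vec u a)"
    using inj by (simp add: sum.reindex)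
  finally have "w = (\<Sum>a\<in>UNIV. (\<lambda>a. f (frame_vec u a)) a *\<^sub>R frame_vec u a)" by simp
  then show ?thesis by (intro exI[where x="\<lambda>a. f (frame_vec u a)"])
qed

lemma gram_mult: "(gram u *v (\<chi> b. c b)) $ a = inner (frame_vec u a) (\<Sum>b\<in>UNIV. c b *\<^sub>R frame_vec u b)"
  by (simp add: gram_def matrix_vector_mult_def inner_sum_right mult.commute)

lemma det_gram_nonzero:
  assumes u: "u \<in> U" shows "det (gram u) \<noteq> 0"
proof (rule det_nonzero_if_ker_trivial)
  fix cv assume z: "gram u *v cv = 0"
  define S where "S = (\<Sum>b\<in>UNIV. cv $ b *\<^sub>R frame_vec u b)"
  have orth: "inner (frame_vec u a) S = 0" for a
    using gram_mult[of u "\<lambda>b. cv $ b" a] z unfolding S_def by simp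
  have "inner S S = (\<Sum>b\<in>UNIV. cv $ b * inner (frame_vec u b) S)"
    by (subst (1) S_def) (simp add: inner_sum_left)
  then have "S = 0" using orth by simp
  then have "cv $ b = 0" for b using frame_vec_independent[OF u, of "\<lambda>b. cv $ b"] unfolding S_def by simp
  then show "cv = 0" by (simp add: vec_eq_iff)
qed

lemma frame_coord_unique:
  assumes u: "u \<in> U" and w: "W u = (\<Sum>b\<in>UNIV. c b *\<^sub>R frame_vec u b)"
  shows "c a = frame_coord W a u"
proof -
  have "gram u *v (\<chi> b. c b) = (\<chi> i. inner (frame_vec u i) (W u))"
    unfolding w by (simp add: vec_eq_iff gram_mult)
  then have "(\<chi> b. c b) = (\<chi> k. det (\<chi> i j. if j = k then (\<chi> i. inner (frame_vec u i) (W u)) $ i else gram u $ i $ j) / det (gram u))"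
    using cramer[OF det_gram_nonzero[OF u]] by blast
  then have "c a = det (\<chi> i j. if j = a then (\<chi> i. inner (frame_vec u i) (W u)) $ i else gram u $ i $ j) / det (gram u)"
    by (simp add: vec_eq_iff)
  moreover have "(\<chi> i j. if j = a then (\<chi> i. inner (frame_vec u i) (W u)) $ i else gram u $ i $ j)
     = (\<chi> i j. if j = a then inner (frame_vec u i) (W u) else inner (frame_vec u i) (frame_vec u j))"
    by (simp add: vec_eq_iff gram_def)
  ultimately show ?thesis unfolding frame_coord_def by simp
qed

lemma frame_coord_expansion:
  assumes u: "u \<in> U" shows "W u = (\<Sum>a\<in>UNIV. frame_coord W a u *\<^sub>R frame_vec u a)"
proof -
  obtain c where c: "W u = (\<Sum>a\<in>UNIV. c a *\<^sub>R frame_vec u a)" using frame_vec_spanning[OF u] by blast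
  then have "c a = frame_coord W a u" for a by (rule frame_coord_unique[OF u])
  then show ?thesis using c by simp
qed

lemma smooth_frame_vec: "smooth_on U (\<lambda>u. frame_vec u a)"
proof (cases a)
  case None then show ?thesis using smooth_x by (simp add: frame_vec_def)
next
  case (Some k) then show ?thesis using smooth_on_pd[OF smooth_x] by (simp add: frame_vec_def)
qed

lemma smooth_frame_coord:
  assumes "smooth_on U W" shows "smooth_on U (frame_coord W a)"
proof -
  have "smooth_on U (\<lambda>u. det (\<chi> i j. if j = a then inner (frame_vec u i) (W u) else inner (frame_vec u i) (frame_vec u j)) / det (gram u))"
  proof (rule smooth_on_divide[OF open_U])
    have "smooth_on U (\<lambda>u. if j = a then inner (frame_vec u i) (W u) else inner (frame_vec u i) (frame_vec u j))"
      for i j by (cases "j = a") (auto intro!: smooth_on_inner[OF open_U] smooth_frame_vec assms)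
    then show "smooth_on U (\<lambda>u. det (\<chi> i j. if j = a then inner (frame_vec u i) (W u)
        else inner (frame_vec u i) (frame_vec u j)))"
      by (rule smooth_on_det[OF open_U])
    show "smooth_on U (\<lambda>u. det (gram u))"
      unfolding gram_def
      by (rule smooth_on_det[OF open_U]) (auto intro!: smooth_on_inner[OF open_U] smooth_frame_vec)
    show "\<And>u. u \<in> U \<Longrightarrow> det (gram u) \<noteq> 0" by (rule det_gram_nonzero)
  qed
  then show ?thesis unfolding frame_coord_def[abs_def] by simp
qed

definition hess :: "'n \<Rightarrow> 'n \<Rightarrow> real^'n \<Rightarrow> real^'m" where "hess i j = pd (pd x j) i"

definition hess_coord :: "'n \<Rightarrow> 'n \<Rightarrow> 'n option \<Rightarrow> real^'n \<Rightarrow> real" where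
  "hess_coord i j a = frame_coord (hess i j) a"

lemma eps_sq: "\<epsilon> * \<epsilon> = 1" using eps_sign by auto

lemma smooth_hess: "smooth_on U (hess i j)" unfolding hess_def by (intro smooth_on_pd smooth_x)

lemma smooth_hess_coord: "smooth_on U (hess_coord i j a)"
  unfolding hess_coord_def by (intro smooth_frame_coord smooth_hess)

lemma hess_sym: "u \<in> U \<Longrightarrow> hess i j u = hess j i u"
  unfolding hess_def by (rule pd_pd_commute_vec[OF open_U smooth_x])

lemma hess_coord_sym: "u \<in> U \<Longrightarrow> hess_coord i j a u = hess_coord j i a u"
  unfolding hess_coord_def frame_coord_def by (simp only: hess_sym[of u i j])

lemma gauss_coeffs_eq:
  assumes u: "u \<in> U"
  shows "gauss_coeffs x \<epsilon> u i j = (\<lambda>k. hess_coord i j (Some k) u, - \<epsilon> * hess_coord i j None u)"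
proof -
  have rep: "hess i j u = (\<Sum>a\<in>UNIV. hess_coord i j a u *\<^sub>R frame_vec u a)"
    unfolding hess_coord_def by (rule frame_coord_expansion[OF u])
  have P: "pd (pd x j) i u
      = (\<Sum>k\<in>UNIV. hess_coord i j (Some k) u *\<^sub>R pd x k u) + (- \<epsilon> * hess_coord i j None u) *\<^sub>R (- \<epsilon> *\<^sub>R x u)"
    using rep eps_sq by (simp add: hess_def sum_UNIV_option frame_vec_def add.commute)
  show ?thesis
    unfolding gauss_coeffs_def
  proof (rule the_equality)
    show "case (\<lambda>k. hess_coord i j (Some k) u, - \<epsilon> * hess_coord i j None u) of (g, c) \<Rightarrow> pd (pd x j) i u =
        (\<Sum>k\<in>UNIV. g k *\<^sub>R pd x k u) + c *\<^sub>R - \<epsilon> *\<^sub>R x u" using P by simp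
  next
    fix y assume "case y of (g, c) \<Rightarrow> pd (pd x j) i u = (\<Sum>k\<in>UNIV. g k *\<^sub>R pd x k u) + c *\<^sub>R - \<epsilon> *\<^sub>R x u"
    then obtain g c where y: "y = (g, c)" and e: "pd (pd x j) i u
        = (\<Sum>k\<in>UNIV. g k *\<^sub>R pd x k u) + c *\<^sub>R - \<epsilon> *\<^sub>R x u"
      by (cases y) auto
    define c' where "c' = (\<lambda>a. case a of None \<Rightarrow> - \<epsilon> * c | Some k \<Rightarrow> g k)"
    have "hess i j u = (\<Sum>a\<in>UNIV. c' a *\<^sub>R frame_vec u a)"
      using e by (simp add: hess_def sum_UNIV_option frame_vec_def c'_def add.commute)
    then have "c' a = hess_coord i j a u" for a unfolding hess_coord_def by (rule frame_coord_unique[OF u])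
    then have "g k = hess_coord i j (Some k) u" "- \<epsilon> * c = hess_coord i j None u" for k
      using c'_def by (metis option.simps(5), metis option.simps(4))
    then have "c = - \<epsilon> * hess_coord i j None u" using eps_sign by auto
    then show "y = (\<lambda>k. hess_coord i j (Some k) u, - \<epsilon> * hess_coord i j None u)"
      using y \<open>\<And>k. g k = hess_coord i j (Some k) u\<close> by auto
  qed
qed

lemma Gam_eq: "u \<in> U \<Longrightarrow> Gam x \<epsilon> u k i j = hess_coord i j (Some k) u"
  unfolding Gam_def using gauss_coeffs_eq by simp

lemma hmet_eq: "u \<in> U \<Longrightarrow> hmet x \<epsilon> u i j = - \<epsilon> * hess_coord i j None u"
  unfolding hmet_def using gauss_coeffs_eq by simp

lemma smooth_Gam: "smooth_on U (\<lambda>v. Gam x \<epsilon> v k i j)"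
  by (rule smooth_on_cong[OF open_U _ smooth_hess_coord[of i j "Some k"]]) (simp add: Gam_eq)

lemma smooth_hmet: "smooth_on U (\<lambda>v. hmet x \<epsilon> v i j)"
proof (rule smooth_on_cong[OF open_U])
  show "smooth_on U (\<lambda>v. - \<epsilon> * hess_coord i j None v)"
    by (intro smooth_on_mult[OF open_U] smooth_on_const[OF open_U] smooth_hess_coord)
qed (simp add: hmet_eq)

lemma Gam_sym: "u \<in> U \<Longrightarrow> Gam x \<epsilon> u k i j = Gam x \<epsilon> u k j i"
  using Gam_eq hess_coord_sym by simp

lemma hmet_sym: "u \<in> U \<Longrightarrow> hmet x \<epsilon> u i j = hmet x \<epsilon> u j i"
  using hmet_eq hess_coord_sym by simp

lemma differentiable_hess_coord: "u \<in> U \<Longrightarrow> hess_coord i j a differentiable (at u)"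
  by (rule smooth_on_differentiable_at[OF open_U smooth_hess_coord])

lemma differentiable_frame_vec: "u \<in> U \<Longrightarrow> (\<lambda>v. frame_vec v a) differentiable (at u)"
  by (rule smooth_on_differentiable_at[OF open_U smooth_frame_vec])

lemma pd_frame_vec:
  assumes u: "u \<in> U"
  shows "pd (\<lambda>v. frame_vec v a) l u
      = (case a of None \<Rightarrow> frame_vec u (Some l) | Some k \<Rightarrow> (\<Sum>b\<in>UNIV. hess_coord l k b u *\<^sub>R frame_vec u b))"
proof (cases a)
  case None then show ?thesis by (simp add: frame_vec_def)
next
  case (Some k)
  have "pd (\<lambda>v. frame_vec v a) l u = hess l k u" using Some by (simp add: frame_vec_def hess_def)
  also have "\<dots> = (\<Sum>b\<in>UNIV. hess_coord l k b u *\<^sub>R frame_vec u b)" unfolding hess_coord_def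
    by (rule frame_coord_expansion[OF u])
  finally show ?thesis using Some by simp
qed

definition dhess_coord :: "'n \<Rightarrow> 'n \<Rightarrow> 'n \<Rightarrow> 'n option \<Rightarrow> real^'n \<Rightarrow> real" where
  "dhess_coord i j l b u = pd (hess_coord i j b) l u + (if b = Some l then hess_coord i j None u else 0)
      + (\<Sum>k\<in>UNIV. hess_coord i j (Some k) u * hess_coord l k b u)"

lemma scaleR_frame_vec_delta: "c *\<^sub>R frame_vec u (Some l) = (\<Sum>b\<in>UNIV. (if b = Some l then c else 0) *\<^sub>R frame_vec u b)"
proof -
  have "(\<Sum>b\<in>UNIV. (if b = Some l then c else 0) *\<^sub>R frame_vec u b) = (\<Sum>b\<in>UNIV. if b = Some l then c *\<^sub>R frame_vec u b else 0)"
    by (rule sum.cong) auto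
  also have "\<dots> = c *\<^sub>R frame_vec u (Some l)" by (subst sum.delta) auto
  finally show ?thesis by simp
qed

lemma sum_scaleR_frame_vec_swap: "(\<Sum>k\<in>UNIV. c k *\<^sub>R (\<Sum>b\<in>UNIV. f k b *\<^sub>R frame_vec u b))
     = (\<Sum>b\<in>UNIV. (\<Sum>k\<in>UNIV. c k * f k b) *\<^sub>R frame_vec u b)"
proof -
  have "(\<Sum>k\<in>UNIV. c k *\<^sub>R (\<Sum>b\<in>UNIV. f k b *\<^sub>R frame_vec u b))
      = (\<Sum>k\<in>UNIV. \<Sum>b\<in>UNIV. (c k * f k b) *\<^sub>R frame_vec u b)"
    by (simp add: scaleR_sum_right)
  also have "\<dots> = (\<Sum>b\<in>UNIV. \<Sum>k\<in>UNIV. (c k * f k b) *\<^sub>R frame_vec u b)"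
    by (rule sum.swap)
  also have "\<dots> = (\<Sum>b\<in>UNIV. (\<Sum>k\<in>UNIV. c k * f k b) *\<^sub>R frame_vec u b)"
    by (simp add: scaleR_sum_left)
  finally show ?thesis .
qed

lemma pd_hess_expansion:
  assumes u: "u \<in> U"
  shows "pd (hess i j) l u = (\<Sum>b\<in>UNIV. dhess_coord i j l b u *\<^sub>R frame_vec u b)"
proof -
  have "pd (hess i j) l u = pd (\<lambda>v. \<Sum>a\<in>UNIV. hess_coord i j a v *\<^sub>R frame_vec v a) l u"
    by (rule pd_cong[OF open_U u]) (simp add: hess_coord_def frame_coord_expansion)
  also have "\<dots> = (\<Sum>a\<in>UNIV. pd (\<lambda>v. hess_coord i j a v *\<^sub>R frame_vec v a) l u)"
  proof (rule pd_sum)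
    fix a show "(\<lambda>v. hess_coord i j a v *\<^sub>R frame_vec v a) differentiable (at u)"
      by (rule differentiable_scaleR[OF differentiable_hess_coord[OF u] differentiable_frame_vec[OF u]])
  qed simp
  also have "\<dots> = (\<Sum>a\<in>UNIV. pd (hess_coord i j a) l u *\<^sub>R frame_vec u a
      + hess_coord i j a u *\<^sub>R pd (\<lambda>v. frame_vec v a) l u)"
    by (rule sum.cong[OF refl], rule pd_scaleR[OF differentiable_hess_coord[OF u] differentiable_frame_vec[OF u]])
  also have "\<dots> = (\<Sum>a\<in>UNIV. pd (hess_coord i j a) l u *\<^sub>R frame_vec u a)
      + (\<Sum>a\<in>UNIV. hess_coord i j a u *\<^sub>R pd (\<lambda>v. frame_vec v a) l u)"
    by (rule sum.distrib)
  also have "(\<Sum>a\<in>UNIV. hess_coord i j a u *\<^sub>R pd (\<lambda>v. frame_vec v a) l u)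
     = hess_coord i j None u *\<^sub>R frame_vec u (Some l)
         + (\<Sum>k\<in>UNIV. hess_coord i j (Some k) u *\<^sub>R (\<Sum>b\<in>UNIV. hess_coord l k b u *\<^sub>R frame_vec u b))"
    by (simp only: sum_UNIV_option pd_frame_vec[OF u] option.simps)
  also have "\<dots> = (\<Sum>b\<in>UNIV. (if b = Some l then hess_coord i j None u else 0) *\<^sub>R frame_vec u b)
       + (\<Sum>b\<in>UNIV. (\<Sum>k\<in>UNIV. hess_coord i j (Some k) u * hess_coord l k b u) *\<^sub>R frame_vec u b)"
    by (simp only: scaleR_frame_vec_delta sum_scaleR_frame_vec_swap)
  finally show ?thesis unfolding dhess_coord_def
    by (simp only: sum.distrib[symmetric] scaleR_add_left[symmetric] add.assoc)
qed

text \<open>Compare the \<open>x\<close>-coordinates of the two sides of \<open>\<partial>\<^sub>l\<partial>\<^sub>i\<partial>\<^sub>jx = \<partial>\<^sub>i\<partial>\<^sub>l\<partial>\<^sub>jx\<close>.\<close>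

lemma codazzi_hess_coord:
  assumes u: "u \<in> U"
  shows "pd (hess_coord i j None) l u + (\<Sum>k\<in>UNIV. hess_coord i j (Some k) u * hess_coord l k None u)
       = pd (hess_coord l j None) i u + (\<Sum>k\<in>UNIV. hess_coord l j (Some k) u * hess_coord i k None u)"
proof -
  have e: "pd (hess i j) l u = pd (hess l j) i u"
    unfolding hess_def by (rule pd_pd_commute_vec[OF open_U smooth_on_pd[OF smooth_x] u])
  have "pd (hess_coord i j None) l u + (\<Sum>k\<in>UNIV. hess_coord i j (Some k) u * hess_coord l k None u)
      = frame_coord (pd (hess i j) l) None u"
    using frame_coord_unique[where W="pd (hess i j) l" and c="\<lambda>b. dhess_coord i j l b u" and a=None,
        OF u pd_hess_expansion[OF u]]
    by (simp add: dhess_coord_def)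
  also have "\<dots> = frame_coord (pd (hess l j) i) None u" unfolding frame_coord_def e ..
  also have "\<dots> = pd (hess_coord l j None) i u
      + (\<Sum>k\<in>UNIV. hess_coord l j (Some k) u * hess_coord i k None u)"
    using frame_coord_unique[where W="pd (hess l j) i" and c="\<lambda>b. dhess_coord l j i b u" and a=None,
        OF u pd_hess_expansion[OF u]]
    by (simp add: dhess_coord_def)
  finally show ?thesis .
qed

definition dhmet :: "'n \<Rightarrow> 'n \<Rightarrow> 'n \<Rightarrow> real^'n \<Rightarrow> real" where
  "dhmet l i j u = pd (\<lambda>v. hmet x \<epsilon> v i j) l u"

lemma hess_coord_None: assumes u: "u \<in> U" shows "hess_coord i j None u = - \<epsilon> * hmet x \<epsilon> u i j"
proof -
  have "- \<epsilon> * hmet x \<epsilon> u i j = (\<epsilon> * \<epsilon>) * hess_coord i j None u"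
    by (simp add: hmet_eq[OF u])
  then show ?thesis using eps_sq by simp
qed

lemma pd_hess_coord_None:
  assumes u: "u \<in> U"
  shows "pd (hess_coord i j None) l u = - \<epsilon> * dhmet l i j u"
proof -
  have "pd (hess_coord i j None) l u = pd (\<lambda>v. (- \<epsilon>) * hmet x \<epsilon> v i j) l u"
    by (rule pd_cong[OF open_U u]) (simp add: hess_coord_None)
  also have "\<dots> = - \<epsilon> * dhmet l i j u"
    using pd_mult[OF differentiable_const smooth_on_differentiable_at[OF open_U smooth_hmet u], of "- \<epsilon>"]
    by (simp add: dhmet_def pd_const)
  finally show ?thesis .
qed

definition Gam_lower :: "real^'n \<Rightarrow> 'n \<Rightarrow> 'n \<Rightarrow> 'n \<Rightarrow> real" where
  "Gam_lower u i j n = (\<Sum>k\<in>UNIV. Gam x \<epsilon> u k i j * hmet x \<epsilon> u k n)"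

lemma codazzi:
  assumes u: "u \<in> U"
  shows "dhmet l i j u + Gam_lower u i j l = dhmet i l j u + Gam_lower u l j i"
proof -
  have "- \<epsilon> * dhmet l i j u + - \<epsilon> * (\<Sum>k\<in>UNIV. Gam x \<epsilon> u k i j * hmet x \<epsilon> u l k)
       = - \<epsilon> * dhmet i l j u + - \<epsilon> * (\<Sum>k\<in>UNIV. Gam x \<epsilon> u k l j * hmet x \<epsilon> u i k)"
    using codazzi_hess_coord[OF u, of i j l]
    by (simp only: pd_hess_coord_None[OF u] hess_coord_None[OF u] Gam_eq[OF u, symmetric]
        sum_distrib_left mult.left_commute)
  moreover have "Gam_lower u i j l = (\<Sum>k\<in>UNIV. Gam x \<epsilon> u k i j * hmet x \<epsilon> u l k)"
    "Gam_lower u l j i = (\<Sum>k\<in>UNIV. Gam x \<epsilon> u k l j * hmet x \<epsilon> u i k)"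
    unfolding Gam_lower_def by (simp_all add: hmet_sym[OF u, of l] hmet_sym[OF u, of i])
  ultimately show ?thesis using eps_sign by (auto simp flip: distrib_left)
qed

section \<open>The Levi-Civita connection and the cubic form\<close>

definition hmat :: "real^'n \<Rightarrow> real^'n^'n" where "hmat u = (\<chi> a b. hmet x \<epsilon> u a b)"

lemma hmat_nth[simp]: "hmat u $ a $ b = hmet x \<epsilon> u a b" by (simp add: hmat_def)

lemma det_hmat_nonzero: assumes u: "u \<in> U" shows "det (hmat u) \<noteq> 0"
proof (rule det_nonzero_if_ker_trivial)
  fix c assume z: "hmat u *v c = 0"
  have "(\<Sum>i\<in>UNIV. \<Sum>j\<in>UNIV. hmet x \<epsilon> u i j * c$i * c$j) = (\<Sum>i\<in>UNIV. c$i * (hmat u *v c)$i)"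
    by (simp add: hmat_def matrix_vector_mult_def sum_distrib_left algebra_simps)
  also have "\<dots> = 0" using z by simp
  finally show "c = 0" using h_pos[OF u] unfolding hpos_def by force
qed

lemma hmet_hinv: assumes u: "u \<in> U"
  shows "(\<Sum>k\<in>UNIV. hmet x \<epsilon> u i k * hinv x \<epsilon> u k j) = kdelta i j"
    "(\<Sum>k\<in>UNIV. hinv x \<epsilon> u i k * hmet x \<epsilon> u k j) = kdelta i j"
proof -
  have inv: "invertible (hmat u)" using det_hmat_nonzero[OF u] invertible_det_nz by blast
  note m = matrix_inv_mult[OF inv]
  show "(\<Sum>k\<in>UNIV. hmet x \<epsilon> u i k * hinv x \<epsilon> u k j) = kdelta i j"
    using arg_cong[OF m(1), of "\<lambda>M. M $ i $ j"]
    by (simp add: matrix_matrix_mult_def mat_def hinv_def hmat_def kdelta_def)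
  show "(\<Sum>k\<in>UNIV. hinv x \<epsilon> u i k * hmet x \<epsilon> u k j) = kdelta i j"
    using arg_cong[OF m(2), of "\<lambda>M. M $ i $ j"]
    by (simp add: matrix_matrix_mult_def mat_def hinv_def hmat_def kdelta_def)
qed

lemma smooth_hinv: "smooth_on U (\<lambda>v. hinv x \<epsilon> v i j)"
proof -
  have "smooth_on U (\<lambda>v. det (\<chi> a b. if b = i then (if a = j then 1 else 0) else hmet x \<epsilon> v a b) / det (hmat v))"
  proof (rule smooth_on_divide[OF open_U])
    have "smooth_on U (\<lambda>v. if b = i then (if a = j then 1 else 0) else hmet x \<epsilon> v a b)" for a b
      by (cases "b = i") (auto intro!: smooth_on_const[OF open_U] smooth_hmet)
    then show "smooth_on U (\<lambda>v. det (\<chi> a b. if b = i then (if a = j then 1 else 0) else hmet x \<epsilon> v a b))"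
      by (rule smooth_on_det[OF open_U])
    show "smooth_on U (\<lambda>v. det (hmat v))" unfolding hmat_def
      by (rule smooth_on_det[OF open_U]) (rule smooth_hmet)
    show "\<And>v. v \<in> U \<Longrightarrow> det (hmat v) \<noteq> 0" by (rule det_hmat_nonzero)
  qed
  moreover have "hinv x \<epsilon> v i j = det (\<chi> a b. if b = i then (if a = j then 1 else 0) else hmet x \<epsilon> v a b) / det (hmat v)"
    if "v \<in> U" for v
  proof -
    have "hinv x \<epsilon> v i j = matrix_inv (hmat v) $ i $ j" by (simp add: hinv_def hmat_def)
    also have "\<dots> = det (\<chi> a b. if b = i then (if a = j then 1 else 0) else hmat v $ a $ b) / det (hmat v)"
      by (rule matrix_inv_nth_cramer[OF det_hmat_nonzero[OF that]])
    also have "(\<chi> a b. if b = i then (if a = j then 1 else 0) else hmat v $ a $ b)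
       = (\<chi> a b. if b = i then (if a = j then 1 else 0) else hmet x \<epsilon> v a b)"
      by (simp add: vec_eq_iff)
    finally show ?thesis .
  qed
  ultimately show ?thesis using smooth_on_cong[OF open_U] by (metis (no_types, lifting))
qed

lemmas smooth_intros = smooth_on_sum[OF open_U] smooth_on_mult[OF open_U] smooth_on_add[OF open_U]
  smooth_on_diff[OF open_U] smooth_on_const[OF open_U] smooth_hinv smooth_hmet smooth_Gam smooth_on_pd

lemma smooth_chr: "smooth_on U (\<lambda>v. chr x \<epsilon> v k i j)"
  unfolding chr_def by (intro smooth_intros finite_UNIV; simp?)

lemma smooth_Kc: "smooth_on U (\<lambda>v. Kc x \<epsilon> v k i j)"
  unfolding Kc_def by (intro smooth_intros smooth_chr)

lemma smooth_Tc: "smooth_on U (\<lambda>v. Tc x \<epsilon> v j)"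
  unfolding Tc_def by (intro smooth_intros smooth_Kc finite_UNIV; simp?)

lemma smooth_Tlow: "smooth_on U (\<lambda>v. Tlow x \<epsilon> v j)"
  unfolding Tlow_def by (intro smooth_intros smooth_Tc finite_UNIV; simp?)

lemma dhmet_sym: "u \<in> U \<Longrightarrow> dhmet l i j u = dhmet l j i u"
  unfolding dhmet_def by (rule pd_cong[OF open_U]) (auto intro: hmet_sym)

definition christoffel1 :: "real^'n \<Rightarrow> 'n \<Rightarrow> 'n \<Rightarrow> 'n \<Rightarrow> real" where
  "christoffel1 u i j l = dhmet i j l u + dhmet j i l u - dhmet l i j u"

lemma chr_unfold: "chr x \<epsilon> u k i j = 1/2 * (\<Sum>l\<in>UNIV. hinv x \<epsilon> u k l * christoffel1 u i j l)"
  unfolding chr_def christoffel1_def dhmet_def ..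

lemma chr_lower:
  assumes u: "u \<in> U"
  shows "(\<Sum>k\<in>UNIV. chr x \<epsilon> u k i j * hmet x \<epsilon> u k n) = 1/2 * christoffel1 u i j n"
proof -
  have "(\<Sum>k\<in>UNIV. chr x \<epsilon> u k i j * hmet x \<epsilon> u k n)
      = (\<Sum>k\<in>UNIV. \<Sum>l\<in>UNIV. 1/2 * (hmet x \<epsilon> u n k * hinv x \<epsilon> u k l * christoffel1 u i j l))"
    unfolding chr_unfold by (simp add: sum_distrib_left sum_distrib_right hmet_sym[OF u, of _ n] mult_ac)
  also have "\<dots> = (\<Sum>l\<in>UNIV. \<Sum>k\<in>UNIV. 1/2 * (hmet x \<epsilon> u n k * hinv x \<epsilon> u k l * christoffel1 u i j l))"
    by (rule sum.swap)
  also have "\<dots> = (\<Sum>l\<in>UNIV. 1/2 * ((\<Sum>k\<in>UNIV. hmet x \<epsilon> u n k * hinv x \<epsilon> u k l) * christoffel1 u i j l))"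
    by (simp add: sum_distrib_left sum_distrib_right)
  also have "\<dots> = (\<Sum>l\<in>UNIV. 1/2 * (kdelta n l * christoffel1 u i j l))"
    by (simp add: hmet_hinv[OF u])
  also have "\<dots> = 1/2 * christoffel1 u i j n" by (simp only: sum_distrib_left[symmetric] sum_kdelta_mult)
  finally show ?thesis .
qed

lemma chr_sym: "u \<in> U \<Longrightarrow> chr x \<epsilon> u k i j = chr x \<epsilon> u k j i"
  unfolding chr_unfold christoffel1_def by (simp add: dhmet_sym add.commute)

lemma dhmet_eq_chr:
  assumes u: "u \<in> U"
  shows "dhmet l a b u = (\<Sum>q\<in>UNIV. chr x \<epsilon> u q l a * hmet x \<epsilon> u q b)
      + (\<Sum>q\<in>UNIV. chr x \<epsilon> u q l b * hmet x \<epsilon> u a q)"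
proof -
  have "(\<Sum>q\<in>UNIV. chr x \<epsilon> u q l b * hmet x \<epsilon> u a q) = (\<Sum>q\<in>UNIV. chr x \<epsilon> u q l b * hmet x \<epsilon> u q a)"
    by (simp add: hmet_sym[OF u, of a])
  then show ?thesis using chr_lower[OF u, of l a b] chr_lower[OF u, of l b a] dhmet_sym[OF u, of l a b]
    unfolding christoffel1_def by simp
qed

text \<open>\<open>Kcubic u n i j = h(K(\<partial>\<^sub>i,\<partial>\<^sub>j),\<partial>\<^sub>n)\<close>: the lowered index comes first.\<close>

definition Kcubic :: "real^'n \<Rightarrow> 'n \<Rightarrow> 'n \<Rightarrow> 'n \<Rightarrow> real" where
  "Kcubic u n i j = (\<Sum>k\<in>UNIV. Kc x \<epsilon> u k i j * hmet x \<epsilon> u k n)"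

lemma Kcubic_eq:
  assumes u: "u \<in> U"
  shows "Kcubic u n i j = Gam_lower u i j n - 1/2 * christoffel1 u i j n"
  unfolding Kcubic_def Gam_lower_def Kc_def using chr_lower[OF u, of i j n]
  by (simp add: left_diff_distrib sum_subtractf)

lemma Gam_lower_sym: "u \<in> U \<Longrightarrow> Gam_lower u i j n = Gam_lower u j i n"
  unfolding Gam_lower_def by (simp add: Gam_sym)

lemma Kcubic_sym_ij:
  assumes u: "u \<in> U" shows "Kcubic u n i j = Kcubic u n j i"
  unfolding Kcubic_def Kc_def by (simp add: Gam_sym[OF u, of _ i j] chr_sym[OF u, of _ i j])

text \<open>By \<open>Kcubic_eq\<close>, \<open>Kcubic\<close> is \<open>Gam_lower\<close> minus half a Christoffel symbol of the first kind;
  the Codazzi equation and the symmetries of \<open>dhmet\<close> and \<open>Gam_lower\<close> make this symmetric in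
  \<open>n\<close> and \<open>i\<close>, which is linear arithmetic over the six index permutations.\<close>

lemma Kcubic_sym_ni:
  assumes u: "u \<in> U" shows "Kcubic u n i j = Kcubic u i n j"
proof -
  note e1 = Kcubic_eq[OF u, of n i j, unfolded christoffel1_def right_diff_distrib distrib_left]
    and e2 = Kcubic_eq[OF u, of i n j, unfolded christoffel1_def right_diff_distrib distrib_left]
  note c1 = codazzi[OF u, of i j n] codazzi[OF u, of j n i] codazzi[OF u, of n i j]
    codazzi[OF u, of n j i] codazzi[OF u, of j i n] codazzi[OF u, of i n j]
  note s1 = dhmet_sym[OF u, of i j n] dhmet_sym[OF u, of j i n] dhmet_sym[OF u, of n i j]
    dhmet_sym[OF u, of n j i] dhmet_sym[OF u, of i n j] dhmet_sym[OF u, of j n i]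
  note g1 = Gam_lower_sym[OF u, of i j n] Gam_lower_sym[OF u, of j n i] Gam_lower_sym[OF u, of n i j]
    Gam_lower_sym[OF u, of n j i] Gam_lower_sym[OF u, of i n j] Gam_lower_sym[OF u, of j i n]
  show ?thesis using e1 e2 c1 s1 g1 by linarith
qed

lemma trace_Kc:
  assumes u: "u \<in> U"
  shows "(\<Sum>k\<in>UNIV. Kc x \<epsilon> u k i k) = real CARD('n) * Tlow x \<epsilon> u i"
proof -
  define tr where "tr a = (\<Sum>k\<in>UNIV. Kc x \<epsilon> u k a k)" for a
  have "Tlow x \<epsilon> u i = (\<Sum>m\<in>UNIV. \<Sum>a\<in>UNIV. (1 / real CARD('n)) * (hmet x \<epsilon> u i m * hinv x \<epsilon> u m a * tr a))"
    unfolding Tlow_def Tc_def tr_def by (simp add: sum_distrib_left mult_ac)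
  also have "\<dots> = (\<Sum>a\<in>UNIV. \<Sum>m\<in>UNIV. (1 / real CARD('n)) * (hmet x \<epsilon> u i m * hinv x \<epsilon> u m a * tr a))"
    by (rule sum.swap)
  also have "\<dots> = (\<Sum>a\<in>UNIV. (1 / real CARD('n)) * ((\<Sum>m\<in>UNIV. hmet x \<epsilon> u i m * hinv x \<epsilon> u m a) * tr a))"
    by (simp add: sum_distrib_left sum_distrib_right)
  also have "\<dots> = (1 / real CARD('n)) * tr i"
    by (simp only: hmet_hinv[OF u] sum_distrib_left[symmetric] sum_kdelta_mult)
  finally show ?thesis unfolding tr_def by simp
qed

section \<open>Covariant derivatives of the difference tensor and the Tchebychev field\<close>

lemma differentiable_Kc: "u \<in> U \<Longrightarrow> (\<lambda>v. Kc x \<epsilon> v k i j) differentiable (at u)"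
  by (rule smooth_on_differentiable_at[OF open_U smooth_Kc])

lemma differentiable_hmet: "u \<in> U \<Longrightarrow> (\<lambda>v. hmet x \<epsilon> v i j) differentiable (at u)"
  by (rule smooth_on_differentiable_at[OF open_U smooth_hmet])

lemma differentiable_Tc: "u \<in> U \<Longrightarrow> (\<lambda>v. Tc x \<epsilon> v j) differentiable (at u)"
  by (rule smooth_on_differentiable_at[OF open_U smooth_Tc])

lemma differentiable_Tlow: "u \<in> U \<Longrightarrow> (\<lambda>v. Tlow x \<epsilon> v j) differentiable (at u)"
  by (rule smooth_on_differentiable_at[OF open_U smooth_Tlow])

definition DK_lower :: "real^'n \<Rightarrow> 'n \<Rightarrow> 'n \<Rightarrow> 'n \<Rightarrow> 'n \<Rightarrow> real" where
  "DK_lower u l n a b = (\<Sum>m\<in>UNIV. cov12 x \<epsilon> (Kc x \<epsilon>) u l m a b * hmet x \<epsilon> u m n)"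

lemma pd_Kcubic:
  assumes u: "u \<in> U"
  shows "pd (\<lambda>v. Kcubic v n a b) l u = (\<Sum>m\<in>UNIV. pd (\<lambda>v. Kc x \<epsilon> v m a b) l u * hmet x \<epsilon> u m n)
     + (\<Sum>m\<in>UNIV. Kc x \<epsilon> u m a b * dhmet l m n u)"
proof -
  have "pd (\<lambda>v. Kcubic v n a b) l u = (\<Sum>m\<in>UNIV. pd (\<lambda>v. Kc x \<epsilon> v m a b * hmet x \<epsilon> v m n) l u)"
    unfolding Kcubic_def
    by (rule pd_sum) (auto intro: differentiable_mult differentiable_Kc[OF u] differentiable_hmet[OF u])
  also have "\<dots> = (\<Sum>m\<in>UNIV. pd (\<lambda>v. Kc x \<epsilon> v m a b) l u * hmet x \<epsilon> u m n + Kc x \<epsilon> u m a b * dhmet l m n u)"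
    by (rule sum.cong[OF refl]) (simp add: pd_mult[OF differentiable_Kc[OF u] differentiable_hmet[OF u]] dhmet_def)
  finally show ?thesis by (simp add: sum.distrib)
qed

text \<open>Since \<open>h\<close> is parallel, lowering an index commutes with \<open>\<nabla>\<close>: \<open>DK_lower\<close> is the
  covariant derivative of the cubic form.\<close>

lemma DK_lower_eq:
  assumes u: "u \<in> U"
  shows "DK_lower u l n a b = pd (\<lambda>v. Kcubic v n a b) l u
     - (\<Sum>q\<in>UNIV. chr x \<epsilon> u q l a * Kcubic u n q b) - (\<Sum>q\<in>UNIV. chr x \<epsilon> u q l b * Kcubic u n a q)
     - (\<Sum>q\<in>UNIV. chr x \<epsilon> u q l n * Kcubic u q a b)"
proof -
  let ?K = "Kc x \<epsilon> u" and ?h = "hmet x \<epsilon> u" and ?c = "chr x \<epsilon> u"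
  have chr_K: "(\<Sum>m\<in>UNIV. (\<Sum>q\<in>UNIV. ?c m l q * ?K q a b) * ?h m n)
      = (\<Sum>m\<in>UNIV. \<Sum>q\<in>UNIV. ?K m a b * ?c q l m * ?h q n)"
    by (subst sum.swap) (simp add: sum_distrib_right sum_distrib_left mult_ac)
  have K_chr: "(\<Sum>m\<in>UNIV. (\<Sum>q\<in>UNIV. ?c q l a * ?K m q b) * ?h m n) = (\<Sum>q\<in>UNIV. ?c q l a * Kcubic u n q b)"
    "(\<Sum>m\<in>UNIV. (\<Sum>q\<in>UNIV. ?c q l b * ?K m a q) * ?h m n) = (\<Sum>q\<in>UNIV. ?c q l b * Kcubic u n a q)"
    unfolding Kcubic_def by (simp_all add: sum_mult_sum_swap)
  have K_dhmet: "(\<Sum>m\<in>UNIV. ?K m a b * dhmet l m n u)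
      = (\<Sum>m\<in>UNIV. \<Sum>q\<in>UNIV. ?K m a b * ?c q l m * ?h q n) + (\<Sum>q\<in>UNIV. ?c q l n * Kcubic u q a b)"
  proof -
    have "(\<Sum>m\<in>UNIV. ?K m a b * dhmet l m n u) = (\<Sum>m\<in>UNIV. \<Sum>q\<in>UNIV. ?K m a b * ?c q l m * ?h q n)
        + (\<Sum>m\<in>UNIV. \<Sum>q\<in>UNIV. ?c q l n * (?K m a b * ?h m q))"
      by (simp add: dhmet_eq_chr[OF u, of l _ n] distrib_left sum_distrib_left sum.distrib mult_ac)
    then show ?thesis unfolding Kcubic_def by (subst (asm) (2) sum.swap) (simp add: sum_distrib_left)
  qed
  have "DK_lower u l n a b = (\<Sum>m\<in>UNIV. pd (\<lambda>v. Kc x \<epsilon> v m a b) l u * ?h m n)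
      + (\<Sum>m\<in>UNIV. (\<Sum>q\<in>UNIV. ?c m l q * ?K q a b) * ?h m n)
      - (\<Sum>m\<in>UNIV. (\<Sum>q\<in>UNIV. ?c q l a * ?K m q b) * ?h m n)
      - (\<Sum>m\<in>UNIV. (\<Sum>q\<in>UNIV. ?c q l b * ?K m a q) * ?h m n)"
    unfolding DK_lower_def cov12_def by (simp add: algebra_simps sum.distrib sum_subtractf)
  then show ?thesis using chr_K K_chr K_dhmet pd_Kcubic[OF u, of n a b l] by simp
qed

lemma DK_lower_sym_ab:
  assumes u: "u \<in> U" shows "DK_lower u l n a b = DK_lower u l n b a"
proof -
  have "pd (\<lambda>v. Kcubic v n a b) l u = pd (\<lambda>v. Kcubic v n b a) l u"
    by (rule pd_cong[OF open_U u]) (rule Kcubic_sym_ij)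
  moreover have "Kcubic u n q a = Kcubic u n a q" "Kcubic u n b q = Kcubic u n q b" "Kcubic u q b a = Kcubic u q a b" for q
    using Kcubic_sym_ij[OF u] by auto
  ultimately show ?thesis unfolding DK_lower_eq[OF u] by simp
qed

lemma DK_lower_sym_na:
  assumes u: "u \<in> U" shows "DK_lower u l n a b = DK_lower u l a n b"
proof -
  have "pd (\<lambda>v. Kcubic v n a b) l u = pd (\<lambda>v. Kcubic v a n b) l u"
    by (rule pd_cong[OF open_U u]) (rule Kcubic_sym_ni)
  moreover have "Kcubic u a q b = Kcubic u q a b" "Kcubic u a n q = Kcubic u n a q" "Kcubic u q n b = Kcubic u n q b" for q
    using Kcubic_sym_ni[OF u] by auto
  ultimately show ?thesis unfolding DK_lower_eq[OF u] by (simp add: algebra_simps)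
qed

definition DT_lower :: "real^'n \<Rightarrow> 'n \<Rightarrow> 'n \<Rightarrow> real" where
  "DT_lower u l i = pd (\<lambda>v. Tlow x \<epsilon> v i) l u - (\<Sum>q\<in>UNIV. chr x \<epsilon> u q l i * Tlow x \<epsilon> u q)"

lemma trace_cov12_Kc:
  assumes u: "u \<in> U"
  shows "(\<Sum>k\<in>UNIV. cov12 x \<epsilon> (Kc x \<epsilon>) u l k i k) = real CARD('n) * DT_lower u l i"
proof -
  let ?K = "Kc x \<epsilon> u" and ?c = "chr x \<epsilon> u"
  have P: "(\<Sum>k\<in>UNIV. pd (\<lambda>v. Kc x \<epsilon> v k i k) l u) = real CARD('n) * pd (\<lambda>v. Tlow x \<epsilon> v i) l u"
  proof -
    have "(\<Sum>k\<in>UNIV. pd (\<lambda>v. Kc x \<epsilon> v k i k) l u) = pd (\<lambda>v. \<Sum>k\<in>UNIV. Kc x \<epsilon> v k i k) l u"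
      by (rule pd_sum[symmetric]) (auto intro: differentiable_Kc[OF u])
    also have "\<dots> = pd (\<lambda>v. real CARD('n) * Tlow x \<epsilon> v i) l u"
      by (rule pd_cong[OF open_U u]) (rule trace_Kc)
    also have "\<dots> = real CARD('n) * pd (\<lambda>v. Tlow x \<epsilon> v i) l u"
      using pd_mult[OF differentiable_const differentiable_Tlow[OF u]] by (simp add: pd_const)
    finally show ?thesis .
  qed
  have Z: "(\<Sum>k\<in>UNIV. \<Sum>m\<in>UNIV. ?c k l m * ?K m i k) = (\<Sum>k\<in>UNIV. \<Sum>m\<in>UNIV. ?c m l k * ?K k i m)"
    by (rule sum.swap)
  have Q: "(\<Sum>k\<in>UNIV. \<Sum>m\<in>UNIV. ?c m l i * ?K k m k) = real CARD('n) * (\<Sum>q\<in>UNIV. ?c q l i * Tlow x \<epsilon> u q)"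
  proof -
    have "(\<Sum>k\<in>UNIV. \<Sum>m\<in>UNIV. ?c m l i * ?K k m k) = (\<Sum>m\<in>UNIV. ?c m l i * (\<Sum>k\<in>UNIV. ?K k m k))"
      by (subst sum.swap) (simp add: sum_distrib_left)
    also have "\<dots> = (\<Sum>m\<in>UNIV. ?c m l i * (real CARD('n) * Tlow x \<epsilon> u m))"
      by (simp add: trace_Kc[OF u])
    finally show ?thesis by (simp add: sum_distrib_left mult_ac)
  qed
  have "(\<Sum>k\<in>UNIV. cov12 x \<epsilon> (Kc x \<epsilon>) u l k i k) = (\<Sum>k\<in>UNIV. pd (\<lambda>v. Kc x \<epsilon> v k i k) l u)
     + (\<Sum>k\<in>UNIV. \<Sum>m\<in>UNIV. ?c k l m * ?K m i k) - (\<Sum>k\<in>UNIV. \<Sum>m\<in>UNIV. ?c m l i * ?K k m k)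
     - (\<Sum>k\<in>UNIV. \<Sum>m\<in>UNIV. ?c m l k * ?K k i m)"
    unfolding cov12_def by (simp add: sum.distrib sum_subtractf)
  then show ?thesis using P Z Q by (simp add: DT_lower_def algebra_simps)
qed

lemma DT_lower_eq_covT:
  assumes u: "u \<in> U"
  shows "DT_lower u l i = (\<Sum>m\<in>UNIV. hmet x \<epsilon> u i m * covT x \<epsilon> u l m)"
proof -
  let ?h = "hmet x \<epsilon> u" and ?c = "chr x \<epsilon> u" and ?T = "Tc x \<epsilon> u"
  have "pd (\<lambda>v. Tlow x \<epsilon> v i) l u = (\<Sum>m\<in>UNIV. pd (\<lambda>v. hmet x \<epsilon> v i m * Tc x \<epsilon> v m) l u)"
    unfolding Tlow_def
    by (rule pd_sum) (auto intro: differentiable_mult differentiable_hmet[OF u] differentiable_Tc[OF u])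
  also have "\<dots> = (\<Sum>m\<in>UNIV. dhmet l i m u * ?T m + ?h i m * pd (\<lambda>v. Tc x \<epsilon> v m) l u)"
    by (rule sum.cong[OF refl]) (simp add: pd_mult[OF differentiable_hmet[OF u] differentiable_Tc[OF u]] dhmet_def)
  also have "\<dots> = (\<Sum>m\<in>UNIV. (\<Sum>q\<in>UNIV. ?c q l i * ?h q m * ?T m) + (\<Sum>q\<in>UNIV. ?c q l m * ?h i q * ?T m)
      + ?h i m * pd (\<lambda>v. Tc x \<epsilon> v m) l u)"
    by (rule sum.cong[OF refl]) (simp add: dhmet_eq_chr[OF u, of l i] distrib_right sum_distrib_right)
  also have "\<dots> = (\<Sum>m\<in>UNIV. \<Sum>q\<in>UNIV. ?c q l i * ?h q m * ?T m) + (\<Sum>m\<in>UNIV. \<Sum>q\<in>UNIV. ?c q l m * ?h i q * ?T m)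
      + (\<Sum>m\<in>UNIV. ?h i m * pd (\<lambda>v. Tc x \<epsilon> v m) l u)"
    by (simp add: sum.distrib)
  also have "(\<Sum>m\<in>UNIV. \<Sum>q\<in>UNIV. ?c q l i * ?h q m * ?T m) = (\<Sum>q\<in>UNIV. ?c q l i * Tlow x \<epsilon> u q)"
  proof -
    have "(\<Sum>m\<in>UNIV. \<Sum>q\<in>UNIV. ?c q l i * ?h q m * ?T m) = (\<Sum>q\<in>UNIV. \<Sum>m\<in>UNIV. ?c q l i * (?h q m * ?T m))"
      by (subst sum.swap) (simp add: mult_ac)
    then show ?thesis by (simp add: Tlow_def sum_distrib_left)
  qed
  also have "(\<Sum>m\<in>UNIV. \<Sum>q\<in>UNIV. ?c q l m * ?h i q * ?T m) = (\<Sum>m\<in>UNIV. \<Sum>q\<in>UNIV. ?h i m * (?c m l q * ?T q))"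
    by (subst sum.swap) (simp add: mult_ac)
  finally have "DT_lower u l i
      = (\<Sum>m\<in>UNIV. \<Sum>q\<in>UNIV. ?h i m * (?c m l q * ?T q)) + (\<Sum>m\<in>UNIV. ?h i m * pd (\<lambda>v. Tc x \<epsilon> v m) l u)"
    unfolding DT_lower_def by simp
  also have "\<dots> = (\<Sum>m\<in>UNIV. ?h i m * covT x \<epsilon> u l m)"
    unfolding covT_def by (simp add: distrib_left sum.distrib sum_distrib_left add.commute)
  finally show ?thesis .
qed

definition trace_coeff :: real where "trace_coeff = real CARD('n) / (real CARD('n) + 2)"

definition Ttrace :: "real^'n \<Rightarrow> 'n \<Rightarrow> 'n \<Rightarrow> 'n \<Rightarrow> real" where
  "Ttrace v k i j = hmet x \<epsilon> v i j * Tc x \<epsilon> v k + Tlow x \<epsilon> v i * kdelta k j + Tlow x \<epsilon> v j * kdelta k i"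

lemma Ktil_eq: "Ktil x \<epsilon> v k i j = Kc x \<epsilon> v k i j - trace_coeff * Ttrace v k i j"
  unfolding Ktil_def trace_coeff_def Ttrace_def ..

lemma differentiable_Ttrace: "u \<in> U \<Longrightarrow> (\<lambda>v. Ttrace v k i j) differentiable (at u)"
  unfolding Ttrace_def
  by (intro differentiable_add differentiable_mult differentiable_hmet differentiable_Tc
      differentiable_Tlow differentiable_const)

lemma cov12_diff_scaled:
  assumes "\<And>k i j. (\<lambda>v. A v k i j) differentiable (at u)" "\<And>k i j. (\<lambda>v. B v k i j) differentiable (at u)"
  shows "cov12 x \<epsilon> (\<lambda>v k i j. A v k i j - c * B v k i j) u l k i j
    = cov12 x \<epsilon> A u l k i j - c * cov12 x \<epsilon> B u l k i j"
proof -
  have "pd (\<lambda>v. A v k i j - c * B v k i j) l u = pd (\<lambda>v. A v k i j) l u - c * pd (\<lambda>v. B v k i j) l u"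
    using assms by (simp add: pd_diff pd_mult pd_const differentiable_mult)
  then show ?thesis
    unfolding cov12_def by (simp add: algebra_simps sum_subtractf sum.distrib sum_distrib_left)
qed

lemma pd_Ttrace:
  assumes u: "u \<in> U"
  shows "pd (\<lambda>v. Ttrace v k i j) l u = dhmet l i j u * Tc x \<epsilon> u k + hmet x \<epsilon> u i j * pd (\<lambda>v. Tc x \<epsilon> v k) l u
    + pd (\<lambda>v. Tlow x \<epsilon> v i) l u * kdelta k j + pd (\<lambda>v. Tlow x \<epsilon> v j) l u * kdelta k i"
  unfolding Ttrace_def
  by (simp add: pd_add pd_mult pd_const differentiable_add differentiable_mult differentiable_hmet[OF u]
      differentiable_Tc[OF u] differentiable_Tlow[OF u] dhmet_def)

text \<open>The pure-trace part is built from \<open>h\<close>, \<open>T\<close> and \<open>\<delta>\<close>; since \<open>h\<close> and \<open>\<delta>\<close> are parallel,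
  only the derivative of \<open>T\<close> survives.\<close>

lemma cov12_Ttrace:
  assumes u: "u \<in> U"
  shows "cov12 x \<epsilon> Ttrace u l k i j
    = hmet x \<epsilon> u i j * covT x \<epsilon> u l k + DT_lower u l i * kdelta k j + DT_lower u l j * kdelta k i"
proof -
  let ?h = "hmet x \<epsilon> u" and ?c = "chr x \<epsilon> u" and ?T = "Tc x \<epsilon> u" and ?L = "Tlow x \<epsilon> u"
  have S1: "(\<Sum>m\<in>UNIV. ?c k l m * Ttrace u m i j)
      = ?h i j * (\<Sum>m\<in>UNIV. ?c k l m * ?T m) + ?L i * ?c k l j + ?L j * ?c k l i"
  proof -
    have "(\<Sum>m\<in>UNIV. ?c k l m * Ttrace u m i j) = (\<Sum>m\<in>UNIV. ?h i j * (?c k l m * ?T m)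
        + ?L i * (?c k l m * kdelta m j) + ?L j * (?c k l m * kdelta m i))"
      by (rule sum.cong[OF refl]) (simp add: Ttrace_def algebra_simps)
    then show ?thesis by (simp only: sum.distrib sum_distrib_left[symmetric] sum_mult_kdelta)
  qed
  have S2: "(\<Sum>m\<in>UNIV. ?c m l i * Ttrace u k m j)
      = ?T k * (\<Sum>m\<in>UNIV. ?c m l i * ?h m j) + kdelta k j * (\<Sum>m\<in>UNIV. ?c m l i * ?L m) + ?L j * ?c k l i"
  proof -
    have "(\<Sum>m\<in>UNIV. ?c m l i * Ttrace u k m j) = (\<Sum>m\<in>UNIV. ?T k * (?c m l i * ?h m j)
        + kdelta k j * (?c m l i * ?L m) + ?L j * (?c m l i * kdelta k m))"
      by (rule sum.cong[OF refl]) (simp add: Ttrace_def algebra_simps)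
    then show ?thesis by (simp only: sum.distrib sum_distrib_left[symmetric] sum_mult_kdelta')
  qed
  have S3: "(\<Sum>m\<in>UNIV. ?c m l j * Ttrace u k i m)
      = ?T k * (\<Sum>m\<in>UNIV. ?c m l j * ?h i m) + ?L i * ?c k l j + kdelta k i * (\<Sum>m\<in>UNIV. ?c m l j * ?L m)"
  proof -
    have "(\<Sum>m\<in>UNIV. ?c m l j * Ttrace u k i m) = (\<Sum>m\<in>UNIV. ?T k * (?c m l j * ?h i m)
        + ?L i * (?c m l j * kdelta k m) + kdelta k i * (?c m l j * ?L m))"
      by (rule sum.cong[OF refl]) (simp add: Ttrace_def algebra_simps)
    then show ?thesis by (simp only: sum.distrib sum_distrib_left[symmetric] sum_mult_kdelta')
  qed
  show ?thesis
    unfolding cov12_def pd_Ttrace[OF u] S1 S2 S3 dhmet_eq_chr[OF u, of l i j] covT_def DT_lower_def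
    by (simp add: algebra_simps)
qed

lemma cov12_Ktil:
  assumes u: "u \<in> U"
  shows "cov12 x \<epsilon> (Ktil x \<epsilon>) u l k i j = cov12 x \<epsilon> (Kc x \<epsilon>) u l k i j
     - trace_coeff * (hmet x \<epsilon> u i j * covT x \<epsilon> u l k + DT_lower u l i * kdelta k j
         + DT_lower u l j * kdelta k i)"
proof -
  have "Ktil x \<epsilon> = (\<lambda>v k i j. Kc x \<epsilon> v k i j - trace_coeff * Ttrace v k i j)"
    by (intro ext) (rule Ktil_eq)
  then show ?thesis
    using cov12_diff_scaled[OF differentiable_Kc[OF u] differentiable_Ttrace[OF u]] cov12_Ttrace[OF u]
    by simp
qed

end

section \<open>Splitting off the pure-trace part of a 4-tensor\<close>

lemma sum2_kdelta_contract:
  "(\<Sum>j\<in>UNIV. \<Sum>l\<in>UNIV. g j l * kdelta j k) = (\<Sum>l\<in>UNIV. g (k::'n::finite) l :: real)"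
  by (subst sum.swap) simp

lemma sum4_power2_eq_0_iff:
  fixes f :: "'a::finite \<Rightarrow> 'b::finite \<Rightarrow> 'c::finite \<Rightarrow> 'd::finite \<Rightarrow> real"
  shows "(\<Sum>k\<in>UNIV. \<Sum>i\<in>UNIV. \<Sum>j\<in>UNIV. \<Sum>l\<in>UNIV. (f k i j l)^2) = 0 \<longleftrightarrow> (\<forall>k i j l. f k i j l = 0)"
proof -
  have h1: "(\<Sum>l\<in>UNIV. (f k i j l)^2) = 0 \<longleftrightarrow> (\<forall>l. f k i j l = 0)" for k i j
    by (subst sum_nonneg_eq_0_iff) auto
  have h2: "(\<Sum>j\<in>UNIV. \<Sum>l\<in>UNIV. (f k i j l)^2) = 0 \<longleftrightarrow> (\<forall>j l. f k i j l = 0)" for k i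
    by (subst sum_nonneg_eq_0_iff) (auto intro: sum_nonneg simp: h1)
  have h3: "(\<Sum>i\<in>UNIV. \<Sum>j\<in>UNIV. \<Sum>l\<in>UNIV. (f k i j l)^2) = 0 \<longleftrightarrow> (\<forall>i j l. f k i j l = 0)" for k
    by (subst sum_nonneg_eq_0_iff) (auto intro!: sum_nonneg simp: h2)
  show ?thesis
    by (subst sum_nonneg_eq_0_iff) (auto intro!: sum_nonneg simp: h3)
qed

lemma sum_kdelta_diag: "(\<Sum>j\<in>UNIV. kdelta (j::'n::finite) j) = real CARD('n)"
  by (simp add: kdelta_def)

definition trace_part :: "('n::finite \<Rightarrow> 'n \<Rightarrow> real) \<Rightarrow> 'n \<Rightarrow> 'n \<Rightarrow> 'n \<Rightarrow> 'n \<Rightarrow> real" where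
  "trace_part t k i j l = real CARD('n) / (real CARD('n) + 2)
     * (t k l * kdelta i j + t i l * kdelta j k + t j l * kdelta i k)"

lemma trace_part_sym_ki: "trace_part t k i j l = trace_part t i k j l"
  unfolding trace_part_def by (simp add: kdelta_sym algebra_simps)

lemma trace_part_sym_ij: "trace_part t k i j l = trace_part t k j i l"
  unfolding trace_part_def by (simp add: kdelta_sym algebra_simps)

lemma trace_trace_part:
  fixes t :: "'n::finite \<Rightarrow> 'n \<Rightarrow> real"
  shows "(\<Sum>j\<in>UNIV. trace_part t j i j l) = real CARD('n) * t i l"
proof -
  let ?N = "real CARD('n)"
  let ?c = "?N / (?N + 2)"
  have "(\<Sum>j\<in>UNIV. trace_part t j i j l)
      = (\<Sum>j\<in>UNIV. (2 * ?c) * (t j l * kdelta i j) + (?c * t i l) * kdelta j j)"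
    by (rule sum.cong[OF refl]) (simp add: trace_part_def algebra_simps)
  also have "\<dots> = ?c * (?N + 2) * t i l"
    by (simp only: sum.distrib sum_distrib_left[symmetric] sum_mult_kdelta' sum_kdelta_diag)
      (simp add: algebra_simps add_divide_distrib)
  also have "\<dots> = ?N * t i l"
    by (simp add: add_nonneg_pos)
  finally show ?thesis .
qed

lemma sum4_mult_trace_kdelta:
  fixes B :: "'n::finite \<Rightarrow> 'n \<Rightarrow> 'n \<Rightarrow> 'n \<Rightarrow> real" and t :: "'n \<Rightarrow> 'n \<Rightarrow> real"
  assumes tr: "\<And>i l. (\<Sum>j\<in>UNIV. B j i j l) = N * t i l"
  shows "(\<Sum>k\<in>UNIV. \<Sum>i\<in>UNIV. \<Sum>j\<in>UNIV. \<Sum>l\<in>UNIV. B k i j l * t i l * kdelta j k)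
    = N * (\<Sum>k\<in>UNIV. \<Sum>l\<in>UNIV. (t k l)\<^sup>2)"
proof -
  have "(\<Sum>k\<in>UNIV. \<Sum>i\<in>UNIV. \<Sum>j\<in>UNIV. \<Sum>l\<in>UNIV. B k i j l * t i l * kdelta j k)
      = (\<Sum>k\<in>UNIV. \<Sum>i\<in>UNIV. \<Sum>l\<in>UNIV. B k i k l * t i l)"
    by (simp only: sum2_kdelta_contract)
  also have "\<dots> = (\<Sum>i\<in>UNIV. \<Sum>l\<in>UNIV. \<Sum>k\<in>UNIV. B k i k l * t i l)"
    by (subst sum.swap) (rule sum.cong[OF refl], rule sum.swap)
  also have "\<dots> = (\<Sum>i\<in>UNIV. \<Sum>l\<in>UNIV. (\<Sum>k\<in>UNIV. B k i k l) * t i l)"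
    by (simp add: sum_distrib_right)
  also have "\<dots> = N * (\<Sum>k\<in>UNIV. \<Sum>l\<in>UNIV. (t k l)\<^sup>2)"
    by (simp add: tr sum_distrib_left power2_eq_square mult_ac)
  finally show ?thesis .
qed

text \<open>For \<open>B\<close> symmetric in its first three slots, the three terms of the pure-trace tensor contribute
  equally; each is reduced to the form of the previous lemma by renaming summation indices.\<close>

lemma sum_mult_trace_part:
  fixes B :: "'n::finite \<Rightarrow> 'n \<Rightarrow> 'n \<Rightarrow> 'n \<Rightarrow> real" and t :: "'n \<Rightarrow> 'n \<Rightarrow> real"
  assumes s1: "\<And>k i j l. B k i j l = B i k j l" and s2: "\<And>k i j l. B k i j l = B k j i l"
    and tr: "\<And>i l. (\<Sum>j\<in>UNIV. B j i j l) = real CARD('n) * t i l"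
  shows "(\<Sum>k\<in>UNIV. \<Sum>i\<in>UNIV. \<Sum>j\<in>UNIV. \<Sum>l\<in>UNIV. B k i j l * trace_part t k i j l)
    = 3 * real CARD('n)^2 / (real CARD('n) + 2) * (\<Sum>k\<in>UNIV. \<Sum>l\<in>UNIV. (t k l)\<^sup>2)"
proof -
  let ?N = "real CARD('n)"
  let ?S = "\<lambda>f. (\<Sum>k\<in>UNIV. \<Sum>i\<in>UNIV. \<Sum>j\<in>UNIV. \<Sum>l\<in>UNIV. f k i j l :: real)"
  have t1: "?S (\<lambda>k i j l. B k i j l * t k l * kdelta i j) = ?N * (\<Sum>k\<in>UNIV. \<Sum>l\<in>UNIV. (t k l)\<^sup>2)"
  proof -
    have "(\<Sum>j\<in>UNIV. B i j j l) = ?N * t i l" for i l using tr by (simp add: s1[of i])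
    from sum4_mult_trace_kdelta[of "\<lambda>k i j l. B i k j l", OF this]
    show ?thesis by (subst sum.swap) (simp add: kdelta_sym)
  qed
  have t3: "?S (\<lambda>k i j l. B k i j l * t j l * kdelta i k) = ?N * (\<Sum>k\<in>UNIV. \<Sum>l\<in>UNIV. (t k l)\<^sup>2)"
  proof -
    have "(\<Sum>j\<in>UNIV. B j j i l) = ?N * t i l" for i l using tr by (simp add: s2[of _ _ i])
    from sum4_mult_trace_kdelta[of "\<lambda>k i j l. B k j i l", OF this]
    show ?thesis by (subst (2) sum.swap) (simp add: kdelta_sym)
  qed
  have "?S (\<lambda>k i j l. B k i j l * trace_part t k i j l)
      = ?N / (?N + 2) * (?S (\<lambda>k i j l. B k i j l * t k l * kdelta i j)
          + ?S (\<lambda>k i j l. B k i j l * t i l * kdelta j k)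
        + ?S (\<lambda>k i j l. B k i j l * t j l * kdelta i k))"
    by (simp add: trace_part_def algebra_simps sum.distrib sum_distrib_left)
  then show ?thesis using t1 sum4_mult_trace_kdelta[where B = B and t = t, OF tr] t3
    by (simp add: power2_eq_square)
qed

lemma sum_sq_decompose_trace_part:
  fixes A :: "'n::finite \<Rightarrow> 'n \<Rightarrow> 'n \<Rightarrow> 'n \<Rightarrow> real" and t :: "'n \<Rightarrow> 'n \<Rightarrow> real"
  assumes s1: "\<And>k i j l. A k i j l = A i k j l" and s2: "\<And>k i j l. A k i j l = A k j i l"
    and tr: "\<And>i l. (\<Sum>j\<in>UNIV. A j i j l) = real CARD('n) * t i l"
  shows "(\<Sum>k\<in>UNIV. \<Sum>i\<in>UNIV. \<Sum>j\<in>UNIV. \<Sum>l\<in>UNIV. (A k i j l)^2)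
     = (\<Sum>k\<in>UNIV. \<Sum>i\<in>UNIV. \<Sum>j\<in>UNIV. \<Sum>l\<in>UNIV. (A k i j l - trace_part t k i j l)^2)
       + 3 * real CARD('n)^2 / (real CARD('n) + 2) * (\<Sum>i\<in>UNIV. \<Sum>j\<in>UNIV. (t j i)^2)"
proof -
  let ?S = "\<lambda>f. (\<Sum>k\<in>UNIV. \<Sum>i\<in>UNIV. \<Sum>j\<in>UNIV. \<Sum>l\<in>UNIV. f k i j l :: real)"
  let ?C = "trace_part t"
  have "(A k i j l - ?C k i j l)\<^sup>2 = (A k i j l)\<^sup>2 - 2 * (A k i j l * ?C k i j l) + ?C k i j l * ?C k i j l"
    for k i j l by (simp add: power2_eq_square algebra_simps)
  then have "?S (\<lambda>k i j l. (A k i j l - ?C k i j l)\<^sup>2) = ?S (\<lambda>k i j l. (A k i j l)\<^sup>2)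
      - 2 * ?S (\<lambda>k i j l. A k i j l * ?C k i j l) + ?S (\<lambda>k i j l. ?C k i j l * ?C k i j l)"
    by (simp only: sum.distrib sum_subtractf sum_distrib_left[symmetric])
  moreover note sum_mult_trace_part[OF s1 s2 tr]
  moreover have "?S (\<lambda>k i j l. ?C k i j l * ?C k i j l)
      = 3 * real CARD('n)^2 / (real CARD('n) + 2) * (\<Sum>k\<in>UNIV. \<Sum>l\<in>UNIV. (t k l)\<^sup>2)"
    by (rule sum_mult_trace_part) (rule trace_part_sym_ki trace_part_sym_ij trace_trace_part)+
  moreover have "(\<Sum>i\<in>UNIV. \<Sum>j\<in>UNIV. (t j i)\<^sup>2) = (\<Sum>k\<in>UNIV. \<Sum>l\<in>UNIV. (t k l)\<^sup>2)"
    by (rule sum.swap)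
  ultimately show ?thesis by simp
qed

section \<open>Tensor components in an orthonormal frame\<close>

lemma sum3_reverse: "(\<Sum>a\<in>UNIV. \<Sum>b\<in>UNIV. \<Sum>c\<in>UNIV. f a b c) = (\<Sum>c\<in>UNIV. \<Sum>b\<in>UNIV. \<Sum>a\<in>UNIV. (f a b c :: real))"
proof -
  have "(\<Sum>a\<in>UNIV. \<Sum>b\<in>UNIV. \<Sum>c\<in>UNIV. f a b c) = (\<Sum>a\<in>UNIV. \<Sum>c\<in>UNIV. \<Sum>b\<in>UNIV. f a b c)"
    by (rule sum.cong[OF refl], rule sum.swap)
  also have "\<dots> = (\<Sum>c\<in>UNIV. \<Sum>a\<in>UNIV. \<Sum>b\<in>UNIV. f a b c)" by (rule sum.swap)
  also have "\<dots> = (\<Sum>c\<in>UNIV. \<Sum>b\<in>UNIV. \<Sum>a\<in>UNIV. f a b c)"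
    by (rule sum.cong[OF refl], rule sum.swap)
  finally show ?thesis .
qed

lemma sum3_rotate: "(\<Sum>a\<in>UNIV. \<Sum>b\<in>UNIV. \<Sum>c\<in>UNIV. f a b c) = (\<Sum>c\<in>UNIV. \<Sum>a\<in>UNIV. \<Sum>b\<in>UNIV. (f a b c :: real))"
proof -
  have "(\<Sum>a\<in>UNIV. \<Sum>b\<in>UNIV. \<Sum>c\<in>UNIV. f a b c) = (\<Sum>a\<in>UNIV. \<Sum>c\<in>UNIV. \<Sum>b\<in>UNIV. f a b c)"
    by (rule sum.cong[OF refl], rule sum.swap)
  also have "\<dots> = (\<Sum>c\<in>UNIV. \<Sum>a\<in>UNIV. \<Sum>b\<in>UNIV. f a b c)" by (rule sum.swap)
  finally show ?thesis .
qed

lemma sum5_first_to_last: "(\<Sum>j\<in>UNIV. \<Sum>g\<in>UNIV. \<Sum>a\<in>UNIV. \<Sum>b\<in>UNIV. \<Sum>n\<in>UNIV. f j g a b n)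
   = (\<Sum>g\<in>UNIV. \<Sum>a\<in>UNIV. \<Sum>b\<in>UNIV. \<Sum>n\<in>UNIV. \<Sum>j\<in>UNIV. (f j g a b n :: real))"
proof -
  have "(\<Sum>j\<in>UNIV. \<Sum>g\<in>UNIV. \<Sum>a\<in>UNIV. \<Sum>b\<in>UNIV. \<Sum>n\<in>UNIV. f j g a b n)
     = (\<Sum>g\<in>UNIV. \<Sum>j\<in>UNIV. \<Sum>a\<in>UNIV. \<Sum>b\<in>UNIV. \<Sum>n\<in>UNIV. f j g a b n)" by (rule sum.swap)
  also have "\<dots> = (\<Sum>g\<in>UNIV. \<Sum>a\<in>UNIV. \<Sum>j\<in>UNIV. \<Sum>b\<in>UNIV. \<Sum>n\<in>UNIV. f j g a b n)"
    by (rule sum.cong[OF refl], rule sum.swap)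
  also have "\<dots> = (\<Sum>g\<in>UNIV. \<Sum>a\<in>UNIV. \<Sum>b\<in>UNIV. \<Sum>j\<in>UNIV. \<Sum>n\<in>UNIV. f j g a b n)"
    by (rule sum.cong[OF refl], rule sum.cong[OF refl], rule sum.swap)
  also have "\<dots> = (\<Sum>g\<in>UNIV. \<Sum>a\<in>UNIV. \<Sum>b\<in>UNIV. \<Sum>n\<in>UNIV. \<Sum>j\<in>UNIV. f j g a b n)"
    by (rule sum.cong[OF refl], rule sum.cong[OF refl], rule sum.cong[OF refl], rule sum.swap)
  finally show ?thesis .
qed

text \<open>Components of \<open>Z g n a b\<close> in the frame \<open>E\<close>, ordered as in \<open>Kder\<close>: \<open>l\<close> is the
  derivative slot, \<open>k\<close> the lowered one.\<close>

definition frame_comp4 ::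
  "('n::finite \<Rightarrow> real^'n) \<Rightarrow> ('n \<Rightarrow> 'n \<Rightarrow> 'n \<Rightarrow> 'n \<Rightarrow> real) \<Rightarrow> 'n \<Rightarrow> 'n \<Rightarrow> 'n \<Rightarrow> 'n \<Rightarrow> real" where
  "frame_comp4 E Z k i j l
      = (\<Sum>g\<in>UNIV. \<Sum>a\<in>UNIV. \<Sum>b\<in>UNIV. \<Sum>n\<in>UNIV. E l $ g * E i $ a * E j $ b * E k $ n * Z g n a b)"

definition frame_comp2 :: "('n::finite \<Rightarrow> real^'n) \<Rightarrow> ('n \<Rightarrow> 'n \<Rightarrow> real) \<Rightarrow> 'n \<Rightarrow> 'n \<Rightarrow> real" where
  "frame_comp2 E Y k l = (\<Sum>g\<in>UNIV. \<Sum>n\<in>UNIV. E l $ g * E k $ n * Y g n)"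

lemma frame_comp4_sym_ij:
  assumes "\<And>g n a b. Z g n a b = Z g n b a"
  shows "frame_comp4 E Z k i j l = frame_comp4 E Z k j i l"
proof -
  have "(\<Sum>a\<in>UNIV. \<Sum>b\<in>UNIV. \<Sum>n\<in>UNIV. E l $ g * E i $ a * E j $ b * E k $ n * Z g n a b)
      = (\<Sum>b\<in>UNIV. \<Sum>a\<in>UNIV. \<Sum>n\<in>UNIV. E l $ g * E i $ a * E j $ b * E k $ n * Z g n a b)" for g
    by (rule sum.swap)
  also have "\<dots> g = (\<Sum>a\<in>UNIV. \<Sum>b\<in>UNIV. \<Sum>n\<in>UNIV. E l $ g * E j $ a * E i $ b * E k $ n * Z g n a b)" for g
    using assms by (simp add: mult_ac)
  finally show ?thesis unfolding frame_comp4_def by simp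
qed

lemma frame_comp4_sym_ki:
  assumes "\<And>g n a b. Z g n a b = Z g a n b"
  shows "frame_comp4 E Z k i j l = frame_comp4 E Z i k j l"
proof -
  have "(\<Sum>a\<in>UNIV. \<Sum>b\<in>UNIV. \<Sum>n\<in>UNIV. E l $ g * E i $ a * E j $ b * E k $ n * Z g n a b)
      = (\<Sum>n\<in>UNIV. \<Sum>b\<in>UNIV. \<Sum>a\<in>UNIV. E l $ g * E i $ a * E j $ b * E k $ n * Z g n a b)" for g
    by (rule sum3_reverse)
  also have "\<dots> g = (\<Sum>a\<in>UNIV. \<Sum>b\<in>UNIV. \<Sum>n\<in>UNIV. E l $ g * E k $ a * E j $ b * E i $ n * Z g n a b)" for g
    using assms by (simp add: mult_ac)
  finally show ?thesis unfolding frame_comp4_def by simp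
qed

lemma sum4_mult_split_14: "(\<Sum>g\<in>UNIV. \<Sum>a\<in>UNIV. \<Sum>b\<in>UNIV. \<Sum>n\<in>UNIV. P g n * Q a b)
   = (\<Sum>g\<in>UNIV. \<Sum>n\<in>UNIV. P g n) * (\<Sum>a\<in>UNIV. \<Sum>b\<in>UNIV. (Q a b :: real))"
proof -
  have "(\<Sum>a\<in>UNIV. \<Sum>b\<in>UNIV. \<Sum>n\<in>UNIV. P g n * Q a b) = (\<Sum>n\<in>UNIV. \<Sum>a\<in>UNIV. \<Sum>b\<in>UNIV. P g n * Q a b)" for g
    by (rule sum3_rotate)
  then show ?thesis by (simp only: sum_distrib_right) (simp only: sum_distrib_left)
qed

lemma sum4_mult_split_12: "(\<Sum>g\<in>UNIV. \<Sum>a\<in>UNIV. \<Sum>b\<in>UNIV. \<Sum>n\<in>UNIV. P g a * Q b n)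
   = (\<Sum>g\<in>UNIV. \<Sum>a\<in>UNIV. P g a) * (\<Sum>b\<in>UNIV. \<Sum>n\<in>UNIV. (Q b n :: real))"
  by (simp only: sum_distrib_right) (simp only: sum_distrib_left)

lemma sum4_mult_split_13: "(\<Sum>g\<in>UNIV. \<Sum>a\<in>UNIV. \<Sum>b\<in>UNIV. \<Sum>n\<in>UNIV. P g b * Q a n)
   = (\<Sum>g\<in>UNIV. \<Sum>b\<in>UNIV. P g b) * (\<Sum>a\<in>UNIV. \<Sum>n\<in>UNIV. (Q a n :: real))"
proof -
  have "(\<Sum>a\<in>UNIV. \<Sum>b\<in>UNIV. \<Sum>n\<in>UNIV. P g b * Q a n) = (\<Sum>b\<in>UNIV. \<Sum>a\<in>UNIV. \<Sum>n\<in>UNIV. P g b * Q a n)" for g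
    by (rule sum.swap)
  then show ?thesis by (simp only: sum_distrib_right) (simp only: sum_distrib_left)
qed

lemma frame_comp4_lin:
  "frame_comp4 E (\<lambda>g n a b. Z1 g n a b - c * (Z2 g n a b + Z3 g n a b + Z4 g n a b)) k i j l
   = frame_comp4 E Z1 k i j l - c * (frame_comp4 E Z2 k i j l + frame_comp4 E Z3 k i j l
       + frame_comp4 E Z4 k i j l)"
  unfolding frame_comp4_def by (simp add: algebra_simps sum.distrib sum_subtractf sum_distrib_left)

lemma frame_comp4_nested: "frame_comp4 E Z k i j l
    = (\<Sum>g\<in>UNIV. E l $ g * (\<Sum>a\<in>UNIV. E i $ a * (\<Sum>b\<in>UNIV. E j $ b * (\<Sum>n\<in>UNIV. E k $ n * Z g n a b))))"
  unfolding frame_comp4_def by (simp add: sum_distrib_left mult.assoc)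

locale orthonormal_frame_chart = centroaffine_chart x U \<epsilon> for x :: "real^'n \<Rightarrow> real^'m" and U \<epsilon> +
  fixes p :: "real^'n" and E :: "'n \<Rightarrow> real^'n"
  assumes p_in_U: "p \<in> U" and orthonormal: "h_orthonormal_frame x \<epsilon> p E"
begin

definition frame_matrix :: "real^'n^'n" where "frame_matrix = (\<chi> a i. E a $ i)"

lemma frame_orthonormal: "(\<Sum>i\<in>UNIV. \<Sum>j\<in>UNIV. E a $ i * E b $ j * hmet x \<epsilon> p i j) = kdelta a b"
  using orthonormal unfolding h_orthonormal_frame_def hform_def by (simp add: mult_ac)

lemma frame_matrix_hmat: "frame_matrix ** (hmat p ** transpose frame_matrix) = mat 1"
proof -
  have "(frame_matrix ** (hmat p ** transpose frame_matrix)) $ a $ b = kdelta a b" for a b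
  proof -
    have "(frame_matrix ** (hmat p ** transpose frame_matrix)) $ a $ b
        = (\<Sum>i\<in>UNIV. E a $ i * (\<Sum>j\<in>UNIV. hmet x \<epsilon> p i j * E b $ j))"
      by (simp add: matrix_matrix_mult_def frame_matrix_def transpose_def)
    also have "\<dots> = (\<Sum>i\<in>UNIV. \<Sum>j\<in>UNIV. E a $ i * E b $ j * hmet x \<epsilon> p i j)"
      by (simp add: sum_distrib_left mult_ac)
    finally show ?thesis using frame_orthonormal by simp
  qed
  then show ?thesis by (simp add: vec_eq_iff mat_def kdelta_def)
qed

lemma invertible_frame_matrix: "invertible frame_matrix"
  using frame_matrix_hmat invertible_right_inverse by blast

lemma sum_frame_eq_hinv: "(\<Sum>a\<in>UNIV. E a $ b * E a $ n) = hinv x \<epsilon> p b n"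
proof -
  have inv: "invertible (hmat p)" using det_hmat_nonzero[OF p_in_U] invertible_det_nz by blast
  have 1: "(hmat p ** transpose frame_matrix) ** frame_matrix = mat 1"
    using frame_matrix_hmat matrix_left_right_inverse by blast
  have "transpose frame_matrix ** frame_matrix
      = (matrix_inv (hmat p) ** hmat p) ** (transpose frame_matrix ** frame_matrix)"
    using matrix_inv_mult(2)[OF inv] by simp
  also have "\<dots> = matrix_inv (hmat p) ** ((hmat p ** transpose frame_matrix) ** frame_matrix)"
    by (simp add: matrix_mul_assoc)
  also have "\<dots> = matrix_inv (hmat p)" using 1 by simp
  finally have "(transpose frame_matrix ** frame_matrix) $ b $ n = matrix_inv (hmat p) $ b $ n" by simp
  then show ?thesis
    by (simp add: matrix_matrix_mult_def frame_matrix_def transpose_def hinv_def hmat_def)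
qed

lemma frame_matrix_injective:
  assumes "\<And>l. (\<Sum>g\<in>UNIV. E l $ g * f g) = 0"
  shows "f g = 0"
proof -
  have "frame_matrix *v (\<chi> g. f g) = 0"
    using assms by (simp add: vec_eq_iff matrix_vector_mult_def frame_matrix_def)
  then have "(\<chi> g. f g) = 0"
    using inj_matrix_vector_mult[OF invertible_frame_matrix] by (metis matrix_vector_mult_0_right injD)
  then show ?thesis by (simp add: vec_eq_iff)
qed

lemma Kder_eq_frame_comp4: "Kder x \<epsilon> p E k i j l = frame_comp4 E (DK_lower p) k i j l"
proof -
  have "(\<Sum>m\<in>UNIV. \<Sum>n\<in>UNIV. E l $ g * E i $ a * E j $ b * cov12 x \<epsilon> (Kc x \<epsilon>) p g m a b * hmet x \<epsilon> p m n * E k $ n)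
     = (\<Sum>n\<in>UNIV. E l $ g * E i $ a * E j $ b * E k $ n * DK_lower p g n a b)" for g a b
  proof -
    have "(\<Sum>m\<in>UNIV. \<Sum>n\<in>UNIV. E l $ g * E i $ a * E j $ b * cov12 x \<epsilon> (Kc x \<epsilon>) p g m a b * hmet x \<epsilon> p m n * E k $ n)
      = (\<Sum>n\<in>UNIV. \<Sum>m\<in>UNIV. E l $ g * E i $ a * E j $ b * cov12 x \<epsilon> (Kc x \<epsilon>) p g m a b * hmet x \<epsilon> p m n * E k $ n)"
      by (rule sum.swap)
    then show ?thesis by (simp add: DK_lower_def sum_distrib_left mult_ac)
  qed
  then show ?thesis unfolding Kder_def frame_comp4_def by simp
qed

lemma DT_lower_eq_covT': "DT_lower p g n = (\<Sum>m\<in>UNIV. covT x \<epsilon> p g m * hmet x \<epsilon> p m n)"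
  unfolding DT_lower_eq_covT[OF p_in_U]
  by (rule sum.cong[OF refl]) (simp add: hmet_sym[OF p_in_U, of n] mult.commute)

lemma Tder_eq_frame_comp2: "Tder x \<epsilon> p E k l = frame_comp2 E (DT_lower p) k l"
proof -
  have "(\<Sum>m\<in>UNIV. \<Sum>n\<in>UNIV. E l $ g * covT x \<epsilon> p g m * hmet x \<epsilon> p m n * E k $ n)
     = (\<Sum>n\<in>UNIV. E l $ g * E k $ n * DT_lower p g n)" for g
  proof -
    have "(\<Sum>m\<in>UNIV. \<Sum>n\<in>UNIV. E l $ g * covT x \<epsilon> p g m * hmet x \<epsilon> p m n * E k $ n)
      = (\<Sum>n\<in>UNIV. \<Sum>m\<in>UNIV. E l $ g * covT x \<epsilon> p g m * hmet x \<epsilon> p m n * E k $ n)"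
      by (rule sum.swap)
    then show ?thesis by (simp add: DT_lower_eq_covT' sum_distrib_left mult_ac)
  qed
  then show ?thesis unfolding Tder_def frame_comp2_def by simp
qed

lemma frame_comp4_eq_0:
  assumes "\<And>k i j l. frame_comp4 E Z k i j l = 0"
  shows "Z g n a b = 0"
proof -
  have z1: "(\<Sum>g\<in>UNIV. E l $ g * (\<Sum>a\<in>UNIV. E i $ a * (\<Sum>b\<in>UNIV. E j $ b * (\<Sum>n\<in>UNIV. E k $ n * Z g n a b)))) = 0" for k i j l
    using assms[of k i j l] unfolding frame_comp4_nested .
  have z2: "(\<Sum>a\<in>UNIV. E i $ a * (\<Sum>b\<in>UNIV. E j $ b * (\<Sum>n\<in>UNIV. E k $ n * Z g n a b))) = 0" for k i j g
    by (rule frame_matrix_injective[where f="\<lambda>g. (\<Sum>a\<in>UNIV. E i $ a * (\<Sum>b\<in>UNIV. E j $ b * (\<Sum>n\<in>UNIV. E k $ n * Z g n a b)))"]) (rule z1)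
  have z3: "(\<Sum>b\<in>UNIV. E j $ b * (\<Sum>n\<in>UNIV. E k $ n * Z g n a b)) = 0" for k j g a
    by (rule frame_matrix_injective[where f="\<lambda>a. (\<Sum>b\<in>UNIV. E j $ b * (\<Sum>n\<in>UNIV. E k $ n * Z g n a b))"]) (rule z2)
  have z4: "(\<Sum>n\<in>UNIV. E k $ n * Z g n a b) = 0" for k g a b
    by (rule frame_matrix_injective[where f="\<lambda>b. (\<Sum>n\<in>UNIV. E k $ n * Z g n a b)"]) (rule z3)
  show "Z g n a b = 0"
    by (rule frame_matrix_injective[where f="\<lambda>n. Z g n a b"]) (rule z4)
qed

lemma hinv_hmet: "(\<Sum>n\<in>UNIV. hinv x \<epsilon> p b n * hmet x \<epsilon> p m n) = kdelta b m"
proof -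
  have "(\<Sum>n\<in>UNIV. hinv x \<epsilon> p b n * hmet x \<epsilon> p m n) = (\<Sum>n\<in>UNIV. hinv x \<epsilon> p b n * hmet x \<epsilon> p n m)"
    by (rule sum.cong[OF refl]) (simp add: hmet_sym[OF p_in_U, of m])
  then show ?thesis using hmet_hinv(2)[OF p_in_U] by simp
qed

lemma trace_frame_comp4: "(\<Sum>j\<in>UNIV. frame_comp4 E (DK_lower p) j i j l)
    = real CARD('n) * frame_comp2 E (DT_lower p) i l"
proof -
  have inner: "(\<Sum>b\<in>UNIV. \<Sum>n\<in>UNIV. hinv x \<epsilon> p b n * DK_lower p g n a b)
      = real CARD('n) * DT_lower p g a" for g a
  proof -
    have "(\<Sum>n\<in>UNIV. hinv x \<epsilon> p b n * DK_lower p g n a b) = cov12 x \<epsilon> (Kc x \<epsilon>) p g b a b" for b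
    proof -
      have "(\<Sum>n\<in>UNIV. hinv x \<epsilon> p b n * DK_lower p g n a b)
          = (\<Sum>n\<in>UNIV. \<Sum>m\<in>UNIV. cov12 x \<epsilon> (Kc x \<epsilon>) p g m a b * (hinv x \<epsilon> p b n * hmet x \<epsilon> p m n))"
        unfolding DK_lower_def by (simp add: sum_distrib_left mult_ac)
      also have "\<dots> = (\<Sum>m\<in>UNIV. \<Sum>n\<in>UNIV. cov12 x \<epsilon> (Kc x \<epsilon>) p g m a b * (hinv x \<epsilon> p b n * hmet x \<epsilon> p m n))"
        by (rule sum.swap)
      also have "\<dots> = (\<Sum>m\<in>UNIV. cov12 x \<epsilon> (Kc x \<epsilon>) p g m a b * kdelta b m)"
        by (simp only: sum_distrib_left[symmetric] hinv_hmet)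
      finally show ?thesis by simp
    qed
    then show ?thesis using trace_cov12_Kc[OF p_in_U, of g a] by simp
  qed
  have "(\<Sum>j\<in>UNIV. frame_comp4 E (DK_lower p) j i j l)
      = (\<Sum>g\<in>UNIV. \<Sum>a\<in>UNIV. \<Sum>b\<in>UNIV. \<Sum>n\<in>UNIV. \<Sum>j\<in>UNIV. E l $ g * E i $ a * E j $ b * E j $ n * DK_lower p g n a b)"
    unfolding frame_comp4_def by (rule sum5_first_to_last)
  also have "\<dots> = (\<Sum>g\<in>UNIV. \<Sum>a\<in>UNIV. \<Sum>b\<in>UNIV. \<Sum>n\<in>UNIV. E l $ g * E i $ a * ((\<Sum>j\<in>UNIV. E j $ b * E j $ n) * DK_lower p g n a b))"
    by (simp add: sum_distrib_left sum_distrib_right mult_ac)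
  also have "\<dots> = (\<Sum>g\<in>UNIV. \<Sum>a\<in>UNIV. E l $ g * E i $ a * (\<Sum>b\<in>UNIV. \<Sum>n\<in>UNIV. hinv x \<epsilon> p b n * DK_lower p g n a b))"
    by (simp add: sum_frame_eq_hinv sum_distrib_left)
  also have "\<dots> = (\<Sum>g\<in>UNIV. \<Sum>a\<in>UNIV. E l $ g * E i $ a * (real CARD('n) * DT_lower p g a))"
    by (simp add: inner)
  also have "\<dots> = real CARD('n) * frame_comp2 E (DT_lower p) i l"
    unfolding frame_comp2_def by (simp add: sum_distrib_left mult_ac)
  finally show ?thesis .
qed

definition DKtil_lower :: "'n \<Rightarrow> 'n \<Rightarrow> 'n \<Rightarrow> 'n \<Rightarrow> real" where
  "DKtil_lower g n a b = (\<Sum>m\<in>UNIV. cov12 x \<epsilon> (Ktil x \<epsilon>) p g m a b * hmet x \<epsilon> p m n)"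

lemma DKtil_lower_eq: "DKtil_lower g n a b
    = DK_lower p g n a b - trace_coeff * (hmet x \<epsilon> p a b * DT_lower p g n
        + DT_lower p g a * hmet x \<epsilon> p b n + DT_lower p g b * hmet x \<epsilon> p a n)"
proof -
  have "DKtil_lower g n a b = (\<Sum>m\<in>UNIV. cov12 x \<epsilon> (Kc x \<epsilon>) p g m a b * hmet x \<epsilon> p m n
      - trace_coeff * (hmet x \<epsilon> p a b * (covT x \<epsilon> p g m * hmet x \<epsilon> p m n)
          + DT_lower p g a * (hmet x \<epsilon> p m n * kdelta m b)
        + DT_lower p g b * (hmet x \<epsilon> p m n * kdelta m a)))"
    unfolding DKtil_lower_def by (rule sum.cong[OF refl]) (simp add: cov12_Ktil[OF p_in_U] algebra_simps)
  also have "\<dots> = DK_lower p g n a b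
      - trace_coeff * (hmet x \<epsilon> p a b * (\<Sum>m\<in>UNIV. covT x \<epsilon> p g m * hmet x \<epsilon> p m n)
      + DT_lower p g a * (\<Sum>m\<in>UNIV. hmet x \<epsilon> p m n * kdelta m b)
          + DT_lower p g b * (\<Sum>m\<in>UNIV. hmet x \<epsilon> p m n * kdelta m a))"
    unfolding DK_lower_def by (simp only: sum_subtractf sum.distrib sum_distrib_left[symmetric])
  also have "\<dots> = DK_lower p g n a b - trace_coeff * (hmet x \<epsilon> p a b * DT_lower p g n
      + DT_lower p g a * hmet x \<epsilon> p b n + DT_lower p g b * hmet x \<epsilon> p a n)"
    by (simp only: sum_mult_kdelta DT_lower_eq_covT'[symmetric])
  finally show ?thesis .
qed

lemma frame_comp4_DKtil_lower: "frame_comp4 E DKtil_lower k i j l = frame_comp4 E (DK_lower p) k i j l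
   - trace_coeff * (frame_comp2 E (DT_lower p) k l * kdelta i j
       + frame_comp2 E (DT_lower p) i l * kdelta j k + frame_comp2 E (DT_lower p) j l * kdelta i k)"
proof -
  have e: "DKtil_lower = (\<lambda>g n a b. DK_lower p g n a b
      - trace_coeff * (hmet x \<epsilon> p a b * DT_lower p g n + DT_lower p g a * hmet x \<epsilon> p b n
          + DT_lower p g b * hmet x \<epsilon> p a n))"
    by (intro ext) (rule DKtil_lower_eq)
  have A: "frame_comp4 E (\<lambda>g n a b. hmet x \<epsilon> p a b * DT_lower p g n) k i j l
      = frame_comp2 E (DT_lower p) k l * kdelta i j"
  proof -
    have "frame_comp4 E (\<lambda>g n a b. hmet x \<epsilon> p a b * DT_lower p g n) k i j l
       = (\<Sum>g\<in>UNIV. \<Sum>a\<in>UNIV. \<Sum>b\<in>UNIV. \<Sum>n\<in>UNIV. (E l $ g * E k $ n * DT_lower p g n) * (E i $ a * E j $ b * hmet x \<epsilon> p a b))"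
      unfolding frame_comp4_def by (simp add: mult_ac)
    also have "\<dots> = frame_comp2 E (DT_lower p) k l * kdelta i j"
      unfolding sum4_mult_split_14 frame_comp2_def frame_orthonormal ..
    finally show ?thesis .
  qed
  have B: "frame_comp4 E (\<lambda>g n a b. DT_lower p g a * hmet x \<epsilon> p b n) k i j l
      = frame_comp2 E (DT_lower p) i l * kdelta j k"
  proof -
    have "frame_comp4 E (\<lambda>g n a b. DT_lower p g a * hmet x \<epsilon> p b n) k i j l
       = (\<Sum>g\<in>UNIV. \<Sum>a\<in>UNIV. \<Sum>b\<in>UNIV. \<Sum>n\<in>UNIV. (E l $ g * E i $ a * DT_lower p g a) * (E j $ b * E k $ n * hmet x \<epsilon> p b n))"
      unfolding frame_comp4_def by (simp add: mult_ac)
    also have "\<dots> = frame_comp2 E (DT_lower p) i l * kdelta j k"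
      unfolding sum4_mult_split_12 frame_comp2_def frame_orthonormal ..
    finally show ?thesis .
  qed
  have C: "frame_comp4 E (\<lambda>g n a b. DT_lower p g b * hmet x \<epsilon> p a n) k i j l
      = frame_comp2 E (DT_lower p) j l * kdelta i k"
  proof -
    have "frame_comp4 E (\<lambda>g n a b. DT_lower p g b * hmet x \<epsilon> p a n) k i j l
       = (\<Sum>g\<in>UNIV. \<Sum>a\<in>UNIV. \<Sum>b\<in>UNIV. \<Sum>n\<in>UNIV. (E l $ g * E j $ b * DT_lower p g b) * (E i $ a * E k $ n * hmet x \<epsilon> p a n))"
      unfolding frame_comp4_def by (simp add: mult_ac)
    also have "\<dots> = frame_comp2 E (DT_lower p) j l * kdelta i k"
      unfolding sum4_mult_split_13 frame_comp2_def frame_orthonormal ..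
    finally show ?thesis .
  qed
  show ?thesis unfolding e frame_comp4_lin A B C ..
qed

lemma DKtil_lower_eq_0_iff: "(\<forall>g n a b. DKtil_lower g n a b = 0)
    \<longleftrightarrow> (\<forall>l k i j. cov12 x \<epsilon> (Ktil x \<epsilon>) p l k i j = 0)"
proof
  assume z: "\<forall>g n a b. DKtil_lower g n a b = 0"
  show "\<forall>l k i j. cov12 x \<epsilon> (Ktil x \<epsilon>) p l k i j = 0"
  proof (intro allI)
    fix l k i j
    have "hmat p *v (\<chi> m. cov12 x \<epsilon> (Ktil x \<epsilon>) p l m i j) = 0"
    proof -
      have "(hmat p *v (\<chi> m. cov12 x \<epsilon> (Ktil x \<epsilon>) p l m i j)) $ n = DKtil_lower l n i j" for n
        unfolding DKtil_lower_def
        by (simp add: matrix_vector_mult_def hmet_sym[OF p_in_U, of n] mult.commute)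
      then show ?thesis using z by (simp add: vec_eq_iff)
    qed
    moreover have "invertible (hmat p)" using det_hmat_nonzero[OF p_in_U] invertible_det_nz by blast
    ultimately have "(\<chi> m. cov12 x \<epsilon> (Ktil x \<epsilon>) p l m i j) = 0"
      using inj_matrix_vector_mult by (metis matrix_vector_mult_0_right injD)
    then show "cov12 x \<epsilon> (Ktil x \<epsilon>) p l k i j = 0" by (simp add: vec_eq_iff)
  qed
next
  assume "\<forall>l k i j. cov12 x \<epsilon> (Ktil x \<epsilon>) p l k i j = 0"
  then show "\<forall>g n a b. DKtil_lower g n a b = 0" unfolding DKtil_lower_def by simp
qed

lemma Kder_sym_ki: "Kder x \<epsilon> p E k i j l = Kder x \<epsilon> p E i k j l"
  unfolding Kder_eq_frame_comp4 by (rule frame_comp4_sym_ki) (rule DK_lower_sym_na[OF p_in_U])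

lemma Kder_sym_ij: "Kder x \<epsilon> p E k i j l = Kder x \<epsilon> p E k j i l"
  unfolding Kder_eq_frame_comp4 by (rule frame_comp4_sym_ij) (rule DK_lower_sym_ab[OF p_in_U])

lemma trace_Kder: "(\<Sum>j\<in>UNIV. Kder x \<epsilon> p E j i j l) = real CARD('n) * Tder x \<epsilon> p E i l"
  unfolding Kder_eq_frame_comp4 Tder_eq_frame_comp2 by (rule trace_frame_comp4)

lemma normsq_DK_decompose:
  "normsq_DK x \<epsilon> p E
     = (\<Sum>k\<in>UNIV. \<Sum>i\<in>UNIV. \<Sum>j\<in>UNIV. \<Sum>l\<in>UNIV.
          (Kder x \<epsilon> p E k i j l - trace_part (Tder x \<epsilon> p E) k i j l)\<^sup>2)
       + 3 * real CARD('n)^2 / (real CARD('n) + 2) * normsq_DT x \<epsilon> p E"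
proof -
  have "normsq_DK x \<epsilon> p E
      = (\<Sum>k\<in>UNIV. \<Sum>i\<in>UNIV. \<Sum>j\<in>UNIV. \<Sum>l\<in>UNIV. (Kder x \<epsilon> p E k i j l)\<^sup>2)"
    unfolding normsq_DK_def by (rule sum3_rotate)
  then show ?thesis
    unfolding normsq_DT_def using sum_sq_decompose_trace_part[OF Kder_sym_ki Kder_sym_ij trace_Kder]
    by simp
qed

lemma Ktil_parallel_iff:
  "(\<forall>l k i j. cov12 x \<epsilon> (Ktil x \<epsilon>) p l k i j = 0)
     \<longleftrightarrow> (\<forall>k i j l. Kder x \<epsilon> p E k i j l = trace_part (Tder x \<epsilon> p E) k i j l)"
proof -
  have "frame_comp4 E DKtil_lower k i j l = Kder x \<epsilon> p E k i j l - trace_part (Tder x \<epsilon> p E) k i j l"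
    for k i j l
    unfolding frame_comp4_DKtil_lower Kder_eq_frame_comp4 Tder_eq_frame_comp2 trace_coeff_def
      trace_part_def ..
  moreover have "(\<forall>g n a b. DKtil_lower g n a b = 0) \<longleftrightarrow> (\<forall>k i j l. frame_comp4 E DKtil_lower k i j l = 0)"
    using frame_comp4_eq_0 by (auto simp: frame_comp4_def)
  ultimately show ?thesis using DKtil_lower_eq_0_iff by auto
qed

end

theorem proposition3p1:
  fixes x :: "real^'n \<Rightarrow> real^'m" and U :: "(real^'n) set" and \<epsilon> :: real
    and p :: "real^'n" and E :: "'n \<Rightarrow> real^'n"
  assumes "CARD('m) = CARD('n) + 1"
    and "smooth_on_open x U"
    and "\<forall>u\<in>U. centroaffine_at x u"
    and "\<epsilon> = 1 \<or> \<epsilon> = -1"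
    and "\<forall>u\<in>U. hpos x \<epsilon> u"
    and "p \<in> U"
    and "h_orthonormal_frame x \<epsilon> p E"
  shows "normsq_DK x \<epsilon> p E \<ge> 3 * real CARD('n)^2 / (real CARD('n) + 2) * normsq_DT x \<epsilon> p E
    \<and> (normsq_DK x \<epsilon> p E = 3 * real CARD('n)^2 / (real CARD('n) + 2) * normsq_DT x \<epsilon> p E
         \<longleftrightarrow> (\<forall>l k i j. cov12 x \<epsilon> (Ktil x \<epsilon>) p l k i j = 0))
    \<and> (normsq_DK x \<epsilon> p E = 3 * real CARD('n)^2 / (real CARD('n) + 2) * normsq_DT x \<epsilon> p E
         \<longleftrightarrow> (\<forall>i j k l. Kder x \<epsilon> p E k i j l = real CARD('n) / (real CARD('n) + 2) *
               (Tder x \<epsilon> p E k l * kdelta i j + Tder x \<epsilon> p E i l * kdelta j k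
                + Tder x \<epsilon> p E j l * kdelta i k)))"
proof -
  interpret orthonormal_frame_chart x U \<epsilon> p E
    using assms by unfold_locales (auto simp: smooth_on_open_iff)
  let ?c = "3 * real CARD('n)^2 / (real CARD('n) + 2) * normsq_DT x \<epsilon> p E"
  let ?trace_part = "\<forall>k i j l. Kder x \<epsilon> p E k i j l = trace_part (Tder x \<epsilon> p E) k i j l"
  define R where "R = (\<Sum>k\<in>UNIV. \<Sum>i\<in>UNIV. \<Sum>j\<in>UNIV. \<Sum>l\<in>UNIV.
    (Kder x \<epsilon> p E k i j l - trace_part (Tder x \<epsilon> p E) k i j l)\<^sup>2)"
  have decompose: "normsq_DK x \<epsilon> p E = R + ?c"
    using normsq_DK_decompose unfolding R_def .
  have "R \<ge> 0" unfolding R_def by (intro sum_nonneg) auto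
  then have "normsq_DK x \<epsilon> p E \<ge> ?c" using decompose by linarith
  moreover have "normsq_DK x \<epsilon> p E = ?c \<longleftrightarrow> ?trace_part"
    unfolding decompose R_def by (simp add: sum4_power2_eq_0_iff)
  moreover have "?trace_part \<longleftrightarrow> (\<forall>i j k l. Kder x \<epsilon> p E k i j l = real CARD('n) / (real CARD('n) + 2) *
      (Tder x \<epsilon> p E k l * kdelta i j + Tder x \<epsilon> p E i l * kdelta j k + Tder x \<epsilon> p E j l * kdelta i k))"
    unfolding trace_part_def by blast
  ultimately show ?thesis using Ktil_parallel_iff by blast
qed

end
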